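(* Let $q_1\ge1$, let $c_1,\dots,c_{q_1}\in\mathcal{D}'$ be deterministic distributions, let $\xi=(\xi_1,\dots,\xi_m)$ be an $m$-dimensional white noise on $U$, and let $\rho_1,\dots,\rho_{q_1}\in\mathbb{R}^m$ (rows $\rho_k=(\rho_{k1},\dots,\rho_{km})$). Let $(v_1,\dots,v_{q_1})$ be the generalised process solution of the algebraic block $N_1\dot v+v=c+R\xi$, where $N_1$ is the $q_1\times q_1$ matrix with ones on the superdiagonal and zeros elsewhere and $R$ is the $q_1\times m$ matrix with rows $\rho_k$; i.e. for every $\phi\in\mathcal{D}$, $$\langle v_j,\phi\rangle=\sum_{k=j}^{q_1}\Big\langle c_k+\sum_{\ell=1}^m\rho_{k\ell}\xi_\ell,\ \phi^{(k-j)}\Big\rangle,\quad j=1,\dots,q_1.$$ Let $r$ be the greatest index such that $\|\rho_r\|\ne0$, and fix $\phi\in\mathcal{E}(q_1)$. Then $\langle(v_1,\dots,v_r),\phi\rangle$ is a Gaussian random vector whose law is absolutely continuous with respect to Lebesgue measure on $\mathbb{R}^r$, and $\langle(v_{r+1},\dots,v_{q_1}),\phi\rangle$ is degenerate (almost surely equal to a constant vector).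
   Context: $U=]0,+\infty[$, $\mathcal{D}=C_c^\infty(U)$, $\mathcal{D}'$ its dual. A one-dimensional white noise $\xi$ is a random distribution such that $\langle\xi,\phi\rangle$, $\phi\in\mathcal{D}$, are jointly centred Gaussian with $E[\langle\xi,\phi\rangle\langle\xi,\psi\rangle]=\int_0^\infty\phi\psi$; an $m$-dimensional white noise has independent such components. Derivatives: $\langle\xi^{(k)},\phi\rangle=(-1)^k\langle\xi,\phi^{(k)}\rangle$. $\mathcal{E}(k)$ denotes the set of test functions $\phi$ such that the covariance matrix of $\big(\langle\xi,\phi\rangle,\langle\dot\xi,\phi\rangle,\dots,\langle\xi^{(k-1)},\phi\rangle\big)$ for a one-dimensional white noise $\xi$ is nonsingular (equivalently, the corresponding covariance for an $m$-dimensional white noise, whose $(i,j)$ $m\times m$ block is $\mathrm{Re}[(-1)^{|i-j|/2}]\,\|\phi^{((i+j)/2)}\|^2 I_m$, is nonsingular). $\|\cdot\|$ is the Euclidean norm. *)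

theory Defs
  imports "HOL-Probability.Probability"
begin

text \<open>Test functions: smooth real functions with compact support inside U = ]0,+inf[.
  (Extended by zero to the whole real line.)  k-th derivative: (deriv ^^ k) phi.\<close>

definition test_fun :: "(real \<Rightarrow> real) \<Rightarrow> bool" where
  "test_fun \<phi> \<longleftrightarrow>
     (\<forall>k x. ((deriv ^^ k) \<phi>) differentiable (at x)) \<and>
     (\<exists>a b. 0 < a \<and> a \<le> b \<and> (\<forall>x. x \<notin> {a..b} \<longrightarrow> \<phi> x = 0))"

definition is_distribution :: "((real \<Rightarrow> real) \<Rightarrow> real) \<Rightarrow> bool" where
  "is_distribution T \<longleftrightarrow>
     (\<forall>\<phi> \<psi> s t. test_fun \<phi> \<longrightarrow> test_fun \<psi> \<longrightarrow>
         T (\<lambda>x. s * \<phi> x + t * \<psi> x) = s * T \<phi> + t * T \<psi>) \<and>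
     (\<forall>a b. 0 < a \<longrightarrow> (\<exists>C N. \<forall>\<phi>. test_fun \<phi> \<longrightarrow> (\<forall>x. x \<notin> {a..b} \<longrightarrow> \<phi> x = 0) \<longrightarrow>
         \<bar>T \<phi>\<bar> \<le> C * (\<Sum>k\<le>N. Sup (range (\<lambda>x. \<bar>(deriv ^^ k) \<phi> x\<bar>)))))"

definition centred_gaussian :: "'a measure \<Rightarrow> ('a \<Rightarrow> real) \<Rightarrow> real \<Rightarrow> bool" where
  "centred_gaussian M X s \<longleftrightarrow> X \<in> borel_measurable M \<and> 0 \<le> s \<and>
     distr M borel X = (if s = 0 then return borel 0 else density lborel (normal_density 0 (sqrt s)))"

definition gaussian_rv :: "'a measure \<Rightarrow> ('a \<Rightarrow> real) \<Rightarrow> bool" where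
  "gaussian_rv M X \<longleftrightarrow> X \<in> borel_measurable M \<and>
     (\<exists>\<mu> \<sigma>. 0 \<le> \<sigma> \<and>
        distr M borel X = (if \<sigma> = 0 then return borel \<mu> else density lborel (normal_density \<mu> \<sigma>)))"

definition gaussian_vector :: "'a measure \<Rightarrow> ('i \<Rightarrow> 'a \<Rightarrow> real) \<Rightarrow> 'i set \<Rightarrow> bool" where
  "gaussian_vector M X I \<longleftrightarrow>
     (\<forall>c :: 'i \<Rightarrow> real. gaussian_rv M (\<lambda>\<omega>. \<Sum>i\<in>I. c i * X i \<omega>))"

text \<open>One-dimensional white noise on U: a random distribution whose values on test functions
  are jointly centred Gaussian with covariance  E[<xi,phi><xi,psi>] = int_0^inf phi psi
  (joint Gaussianity: every finite linear combination is centred Gaussian with the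
  variance prescribed by the covariance).\<close>

definition white_noise :: "'a measure \<Rightarrow> ('a \<Rightarrow> (real \<Rightarrow> real) \<Rightarrow> real) \<Rightarrow> bool" where
  "white_noise M \<xi> \<longleftrightarrow>
     (\<forall>\<omega>\<in>space M. is_distribution (\<xi> \<omega>)) \<and>
     (\<forall>\<phi>. test_fun \<phi> \<longrightarrow> (\<lambda>\<omega>. \<xi> \<omega> \<phi>) \<in> borel_measurable M) \<and>
     (\<forall>(\<phi>s :: (real \<Rightarrow> real) list) (cs :: real list).
        length cs = length \<phi>s \<longrightarrow> (\<forall>\<phi>\<in>set \<phi>s. test_fun \<phi>) \<longrightarrow>
        centred_gaussian M (\<lambda>\<omega>. \<Sum>i<length \<phi>s. cs ! i * \<xi> \<omega> (\<phi>s ! i))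
          (\<Sum>i<length \<phi>s. \<Sum>j<length \<phi>s.
              cs ! i * cs ! j * integral {0<..} (\<lambda>x. (\<phi>s ! i) x * (\<phi>s ! j) x)))"

text \<open>m-dimensional white noise (components indexed 1..m): independent one-dimensional
  white noises (independence of the random distributions, viewed as random elements of
  the product space of their values on all test functions).\<close>

definition white_noise_m :: "'a measure \<Rightarrow> nat \<Rightarrow> (nat \<Rightarrow> 'a \<Rightarrow> (real \<Rightarrow> real) \<Rightarrow> real) \<Rightarrow> bool" where
  "white_noise_m M m \<xi> \<longleftrightarrow>
     (\<forall>l\<in>{1..m}. white_noise M (\<xi> l)) \<and>
     prob_space.indep_vars M (\<lambda>_. Pi\<^sub>M {\<phi>. test_fun \<phi>} (\<lambda>_. borel))
        (\<lambda>l \<omega>. restrict (\<xi> l \<omega>) {\<phi>. test_fun \<phi>}) {1..m}"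

text \<open>The set E(k): test functions phi for which the covariance matrix of
  (<xi,phi>, <xi',phi>, ..., <xi^(k-1),phi>) for a one-dimensional white noise is nonsingular.
  Its (i,j) entry is E[<xi^(i),phi><xi^(j),phi>] = (-1)^(i+j) int_0^inf phi^(i) phi^(j).\<close>

definition cov_deriv :: "(real \<Rightarrow> real) \<Rightarrow> nat \<Rightarrow> nat \<Rightarrow> real" where
  "cov_deriv \<phi> i j = (-1) ^ (i + j) * integral {0<..} (\<lambda>x. (deriv ^^ i) \<phi> x * (deriv ^^ j) \<phi> x)"

definition E_set :: "nat \<Rightarrow> (real \<Rightarrow> real) set" where
  "E_set k = {\<phi>. test_fun \<phi> \<and>
     (\<forall>a :: nat \<Rightarrow> real. (\<forall>i<k. (\<Sum>j<k. cov_deriv \<phi> i j * a j) = 0) \<longrightarrow> (\<forall>j<k. a j = 0))}"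

end

theory Submission
  imports Defs
begin

(* Fix t. By the defining formula, sum_j t_j <v_j, phi> is a constant plus a sum over l of
   independent centred Gaussian variables <xi_l, sum_d a_ld phi^(d)>, so it is Gaussian with
   variance Q(t), a quadratic form in t. Since phi lies in E(q1), the derivatives phi, ...,
   phi^(q1-1) have a nonsingular Gram matrix, and a nonzero t with least nonzero index p puts
   the coefficient t_p rho_rl on phi^(r-p); hence Q is positive definite in t_1, ..., t_r.
   A Gram-Schmidt (LDL) diagonalisation of Q shows that the law of (<v_1, phi>, ..., <v_r, phi>)
   has the characteristic function of the image of a product of nondegenerate normal laws
   under a unitriangular affine map. Characteristic functions determine finite measures on
   R^r, and unitriangular affine maps preserve Lebesgue measure, so this law is absolutely
   continuous. For j > r all rho_k with k >= j vanish, so <v_j, phi> is constant. *)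

section \<open>Gaussian laws on the real line\<close>

definition gauss_law :: "real \<Rightarrow> real \<Rightarrow> real measure" where
  "gauss_law a q = (if q = 0 then return borel a else density lborel (normal_density a (sqrt q)))"

lemma sets_gauss_law [simp, measurable_cong]: "sets (gauss_law a q) = sets borel"
  by (simp add: gauss_law_def)

lemma real_distribution_gauss_law: "0 \<le> q \<Longrightarrow> real_distribution (gauss_law a q)"
  by (cases "q = 0")
     (simp_all add: gauss_law_def real_distribution_def real_distribution_axioms_def
        prob_space_return prob_space_normal_density)

lemma centred_gaussian_iff_gauss_law:
  "centred_gaussian M X q \<longleftrightarrow> X \<in> borel_measurable M \<and> 0 \<le> q \<and> distr M borel X = gauss_law 0 q"
  by (simp add: centred_gaussian_def gauss_law_def)

lemma gaussian_rvI_gauss_law: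
  assumes "X \<in> borel_measurable M" "0 \<le> q" "distr M borel X = gauss_law a q"
  shows "gaussian_rv M X"
  unfolding gaussian_rv_def
  using assms by (intro conjI exI[of _ a] exI[of _ "sqrt q"]) (auto simp: gauss_law_def)

lemma char_normal_density:
  assumes "0 < s"
  shows "char (density lborel (normal_density a s)) t = iexp (t * a) * exp (- ((s * t)\<^sup>2) / 2)"
proof -
  interpret S: prob_space std_normal_distribution
    by (simp add: prob_space_normal_density)
  have "distributed std_normal_distribution lborel (\<lambda>x. x) (normal_density 0 1)"
    by (auto simp: distributed_def distr_id2)
  then have "distributed std_normal_distribution lborel (\<lambda>x. a + s * x) (normal_density (a + s * 0) (\<bar>s\<bar> * 1))"
    by (rule S.normal_density_affine) (use assms in auto)
  then have law: "distr std_normal_distribution lborel (\<lambda>x. a + s * x) = density lborel (normal_density a s)"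
    using assms by (simp add: distributed_def)
  have "char (density lborel (normal_density a s)) t = (CLINT x|std_normal_distribution. iexp (t * (a + s * x)))"
    unfolding char_def law[symmetric] by (subst integral_distr) auto
  also have "\<dots> = (CLINT x|std_normal_distribution. iexp (t * a) * iexp ((s * t) * x))"
    by (rule Bochner_Integration.integral_cong) (auto simp: algebra_simps exp_add[symmetric])
  also have "\<dots> = iexp (t * a) * char std_normal_distribution (s * t)"
    unfolding char_def by simp
  finally show ?thesis by (simp add: char_std_normal_distribution)
qed

lemma char_gauss_law:
  assumes "0 \<le> q"
  shows "char (gauss_law a q) t = iexp (t * a) * exp (- q * t\<^sup>2 / 2)"
proof (cases "q = 0")
  case True
  then show ?thesis by (simp add: gauss_law_def char_def integral_return)
next
  case False
  with assms show ?thesis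
    by (simp add: gauss_law_def char_normal_density power_mult_distrib)
qed

lemma (in prob_space) distr_eq_gauss_lawI:
  assumes "X \<in> borel_measurable M" "0 \<le> q"
    and "\<And>t. char (distr M borel X) t = iexp (t * a) * exp (- q * t\<^sup>2 / 2)"
  shows "distr M borel X = gauss_law a q"
  using assms
  by (intro Levy_uniqueness) (auto simp: char_gauss_law real_distribution_gauss_law)

lemma char_density_const:
  assumes "sets M = sets borel" "0 \<le> c"
  shows "char (density M (\<lambda>_. ennreal c)) t = c *\<^sub>R char M t"
proof -
  have "(\<lambda>x. iexp (t * x)) \<in> borel_measurable M"
    unfolding measurable_cong_sets[OF assms(1) refl] by measurable
  then have "char (density M (\<lambda>_. ennreal c)) t = (CLINT x|M. c *\<^sub>R iexp (t * x))"
    unfolding char_def by (rule integral_density) (use assms(2) in auto)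
  then show ?thesis
    by (simp add: char_def)
qed

lemma real_distribution_normalise:
  assumes "finite_measure M" "sets M = sets borel" and c: "0 < measure M (space M)"
  shows "real_distribution (density M (\<lambda>_. ennreal (1 / measure M (space M))))"
proof -
  interpret finite_measure M by fact
  let ?c = "measure M (space M)"
  have "emeasure (density M (\<lambda>_. ennreal (1 / ?c))) (space M) = ennreal (1 / ?c) * ennreal ?c"
    by (simp add: emeasure_density_const emeasure_eq_measure)
  also have "\<dots> = 1"
    using c by (simp flip: ennreal_mult)
  finally have "prob_space (density M (\<lambda>_. ennreal (1 / ?c)))"
    by (intro prob_spaceI) simp
  with assms(2) show ?thesis
    by (simp add: real_distribution_def real_distribution_axioms_def)
qed

lemma (in prob_space) distr_add_const_gauss_law:
  assumes "X \<in> borel_measurable M" "0 \<le> q" "distr M borel X = gauss_law 0 q"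
  shows "distr M borel (\<lambda>\<omega>. a + X \<omega>) = gauss_law a q"
proof (rule distr_eq_gauss_lawI)
  show "(\<lambda>\<omega>. a + X \<omega>) \<in> borel_measurable M"
    using assms(1) by simp
  fix s
  have "char (distr M borel (\<lambda>\<omega>. a + X \<omega>)) s = (CLINT \<omega>|M. iexp (s * a) * iexp (s * X \<omega>))"
    unfolding char_def using assms(1) by (simp add: integral_distr algebra_simps exp_add[symmetric])
  also have "\<dots> = iexp (s * a) * char (distr M borel X) s"
    unfolding char_def using assms(1) by (simp add: integral_distr)
  finally show "char (distr M borel (\<lambda>\<omega>. a + X \<omega>)) s = iexp (s * a) * exp (- q * s\<^sup>2 / 2)"
    using assms(2,3) by (simp add: char_gauss_law)
qed (fact assms(2))

text \<open>The total masses agree, being the values of the characteristic functions at 0.\<close>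

lemma finite_measure_char_unique:
  fixes M N :: "real measure"
  assumes "finite_measure M" "finite_measure N" "sets M = sets borel" "sets N = sets borel"
    and char_eq: "char M = char N"
  shows "M = N"
proof -
  interpret M: finite_measure M by fact
  interpret N: finite_measure N by fact
  define c where "c = measure M (space M)"
  have "char M 0 = c" "char N 0 = measure N (space N)"
    by (simp_all add: char_def c_def scaleR_conv_of_real)
  then have c_N: "measure N (space N) = c"
    using char_eq by simp
  have spaces: "space M = UNIV" "space N = UNIV"
    using assms(3,4) by (simp_all add: sets_eq_imp_space_eq)
  show ?thesis
  proof (cases "c = 0")
    case True
    have "emeasure M A = 0 \<and> emeasure N A = 0" if "A \<in> sets M" for A
    proof -
      have "emeasure M A \<le> emeasure M (space M)" "emeasure N A \<le> emeasure N (space N)"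
        using that assms(3,4) by (auto intro!: emeasure_mono simp: spaces)
      with True c_N show ?thesis
        by (simp add: c_def M.emeasure_eq_measure N.emeasure_eq_measure)
    qed
    with assms(3,4) show ?thesis by (intro measure_eqI) auto
  next
    case False
    then have c: "0 < c" by (simp add: c_def order_less_le)
    have "real_distribution (density M (\<lambda>_. ennreal (1 / c)))"
      "real_distribution (density N (\<lambda>_. ennreal (1 / c)))"
      using real_distribution_normalise[of M] real_distribution_normalise[of N] assms c c_N
      by (simp_all add: c_def)
    moreover have "char (density M (\<lambda>_. ennreal (1 / c))) = char (density N (\<lambda>_. ennreal (1 / c)))"
      using assms(3,4) c char_eq by (intro ext) (simp add: char_density_const)
    ultimately have "density M (\<lambda>_. ennreal (1 / c)) = density N (\<lambda>_. ennreal (1 / c))"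
      by (rule Levy_uniqueness)
    then have "ennreal (1 / c) * emeasure M A = ennreal (1 / c) * emeasure N A" if "A \<in> sets M" for A
      using that assms(3,4) emeasure_density_const[of A M "1 / c"] emeasure_density_const[of A N "1 / c"]
      by simp
    with c assms(3,4) show ?thesis
      by (intro measure_eqI) (auto simp: ennreal_mult_cancel_left)
  qed
qed

section \<open>Uniqueness of multivariate characteristic functions\<close>

definition char_vec :: "'i set \<Rightarrow> ('i \<Rightarrow> real) measure \<Rightarrow> ('i \<Rightarrow> real) \<Rightarrow> complex" where
  "char_vec I \<mu> t = (CLINT x|\<mu>. iexp (\<Sum>j\<in>I. t j * x j))"

lemma borel_measurable_linear_PiM [measurable]:
  fixes t :: "'i \<Rightarrow> real"
  assumes "J \<subseteq> I"
  shows "(\<lambda>x. \<Sum>j\<in>J. t j * x j) \<in> borel_measurable (Pi\<^sub>M I (\<lambda>_. lborel))"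
  using assms by (intro borel_measurable_sum borel_measurable_times borel_measurable_const)
    (auto intro: measurable_component_singleton)

context
  fixes I :: "'i set" and i :: 'i and \<mu> :: "('i \<Rightarrow> real) measure"
  assumes finite_I: "finite I" and i_notin_I: "i \<notin> I" and finite_\<mu>: "finite_measure \<mu>"
    and sets_\<mu> [measurable_cong]: "sets \<mu> = sets (Pi\<^sub>M (insert i I) (\<lambda>_. lborel))"
begin

interpretation finite_measure \<mu> by (rule finite_\<mu>)

lemma measurable_restrict_I [measurable]: "(\<lambda>x. restrict x I) \<in> measurable \<mu> (Pi\<^sub>M I (\<lambda>_. lborel))"
  using measurable_restrict_subset[of I "insert i I" "\<lambda>_. lborel"]
  by (simp add: measurable_cong_sets[OF sets_\<mu> refl] subset_insertI)

definition weighted_marginal :: "(real \<Rightarrow> real) \<Rightarrow> ('i \<Rightarrow> real) measure" where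
  "weighted_marginal w =
     distr (density \<mu> (\<lambda>x. ennreal (w (x i)))) (Pi\<^sub>M I (\<lambda>_. lborel)) (\<lambda>x. restrict x I)"

lemma sets_weighted_marginal: "sets (weighted_marginal w) = sets (Pi\<^sub>M I (\<lambda>_. lborel))"
  by (simp add: weighted_marginal_def)

lemma finite_measure_weighted_marginal:
  assumes [measurable]: "w \<in> borel_measurable borel" and "\<And>y. w y \<le> K"
  shows "finite_measure (weighted_marginal w)"
  unfolding weighted_marginal_def
proof (rule finite_measure.finite_measure_distr)
  have "emeasure (density \<mu> (\<lambda>x. ennreal (w (x i)))) (space \<mu>) = (\<integral>\<^sup>+x. ennreal (w (x i)) \<partial>\<mu>)"
    by (subst emeasure_density) (auto intro!: nn_integral_cong)
  also have "\<dots> \<le> (\<integral>\<^sup>+x. ennreal K \<partial>\<mu>)"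
    by (intro nn_integral_mono) (simp add: assms(2) ennreal_leI)
  also have "\<dots> < \<infinity>"
    using emeasure_finite[of "space \<mu>"] by (simp add: ennreal_mult_eq_top_iff less_top[symmetric])
  finally show "finite_measure (density \<mu> (\<lambda>x. ennreal (w (x i))))"
    by (intro finite_measureI) simp
qed simp

lemma char_vec_weighted_marginal:
  assumes [measurable]: "w \<in> borel_measurable borel" and "\<And>y. 0 \<le> w y"
  shows "char_vec I (weighted_marginal w) t = (CLINT x|\<mu>. w (x i) *\<^sub>R iexp (\<Sum>j\<in>I. t j * x j))"
proof -
  have "char_vec I (weighted_marginal w) t =
      (CLINT x|density \<mu> (\<lambda>x. ennreal (w (x i))). iexp (\<Sum>j\<in>I. t j * restrict x I j))"
    unfolding char_vec_def weighted_marginal_def by (rule integral_distr) simp_all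
  also have "\<dots> = (CLINT x|\<mu>. w (x i) *\<^sub>R iexp (\<Sum>j\<in>I. t j * x j))"
    using assms(2) by (subst integral_density) (auto intro!: Bochner_Integration.integral_cong)
  finally show ?thesis .
qed

lemma integral_indicator_weighted_marginal:
  assumes [measurable]: "w \<in> borel_measurable borel" "C \<in> sets (Pi\<^sub>M I (\<lambda>_. lborel))"
    and "\<And>y. 0 \<le> w y"
  shows "(LINT y|weighted_marginal w. (indicator C y :: real)) = (LINT x|\<mu>. w (x i) * indicator C (restrict x I))"
proof -
  have "(LINT y|weighted_marginal w. (indicator C y :: real)) =
      (LINT x|density \<mu> (\<lambda>x. ennreal (w (x i))). indicator C (restrict x I))"
    unfolding weighted_marginal_def by (rule Bochner_Integration.integral_distr) simp_all
  also have "\<dots> = (LINT x|\<mu>. w (x i) * indicator C (restrict x I))"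
    using assms(3) by (subst integral_density) simp_all
  finally show ?thesis .
qed

lemma char_vec_weighted_marginal_cos:
  "char_vec I (weighted_marginal (\<lambda>y. 1 + cos (s * y + \<theta>))) t =
     char_vec (insert i I) \<mu> (t(i := 0)) +
     (iexp \<theta> * char_vec (insert i I) \<mu> (t(i := s)) + iexp (- \<theta>) * char_vec (insert i I) \<mu> (t(i := - s))) / 2"
proof -
  let ?a = "\<lambda>x. \<Sum>j\<in>I. t j * x j"
  have char_upd: "char_vec (insert i I) \<mu> (t(i := c)) = (CLINT x|\<mu>. iexp (c * x i + ?a x))" for c
  proof -
    have "(\<Sum>j\<in>I. (t(i := c)) j * x j) = ?a x" for x
      using i_notin_I by (intro sum.cong) auto
    then have "(\<Sum>j\<in>insert i I. (t(i := c)) j * x j) = c * x i + ?a x" for x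
      using finite_I i_notin_I by simp
    then show ?thesis by (simp add: char_vec_def)
  qed
  have cos_expand: "(1 + cos (s * x i + \<theta>)) *\<^sub>R iexp (?a x) =
      iexp (0 * x i + ?a x) + (iexp \<theta> * iexp (s * x i + ?a x) + iexp (- \<theta>) * iexp (- s * x i + ?a x)) / 2" for x
    by (simp add: scaleR_conv_of_real cos_of_real[symmetric] cos_exp_eq algebra_simps
        exp_add[symmetric] add_divide_distrib)
  have integrable: "integrable \<mu> (\<lambda>x. iexp (c * x i + ?a x))" for c
    by (rule integrable_const_bound[where B=1]) simp_all
  have linear: "(CLINT x|\<mu>. f x + (a * g x + b * h x) / 2) =
      (CLINT x|\<mu>. f x) + (a * (CLINT x|\<mu>. g x) + b * (CLINT x|\<mu>. h x)) / 2"
    if "integrable \<mu> f" "integrable \<mu> g" "integrable \<mu> h" for f g h :: "_ \<Rightarrow> complex" and a b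
    using that by simp
  have "0 \<le> 1 + cos y" for y :: real
    using cos_ge_minus_one[of y] by linarith
  then have "char_vec I (weighted_marginal (\<lambda>y. 1 + cos (s * y + \<theta>))) t =
      (CLINT x|\<mu>. (1 + cos (s * x i + \<theta>)) *\<^sub>R iexp (?a x))"
    by (subst char_vec_weighted_marginal) simp_all
  also have "\<dots> = (CLINT x|\<mu>. iexp (0 * x i + ?a x) +
      (iexp \<theta> * iexp (s * x i + ?a x) + iexp (- \<theta>) * iexp (- s * x i + ?a x)) / 2)"
    by (simp only: cos_expand)
  also have "\<dots> = (CLINT x|\<mu>. iexp (0 * x i + ?a x)) +
      (iexp \<theta> * (CLINT x|\<mu>. iexp (s * x i + ?a x)) + iexp (- \<theta>) * (CLINT x|\<mu>. iexp (- s * x i + ?a x))) / 2"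
    by (intro linear integrable)
  also have "\<dots> = char_vec (insert i I) \<mu> (t(i := 0)) +
     (iexp \<theta> * char_vec (insert i I) \<mu> (t(i := s)) + iexp (- \<theta>) * char_vec (insert i I) \<mu> (t(i := - s))) / 2"
    by (simp only: char_upd)
  finally show ?thesis .
qed

definition slice_law :: "('i \<Rightarrow> real) set \<Rightarrow> real measure" where
  "slice_law C = distr (density \<mu> (\<lambda>x. ennreal (indicator C (restrict x I)))) borel (\<lambda>x. x i)"

definition cos_moment :: "('i \<Rightarrow> real) set \<Rightarrow> real \<Rightarrow> real \<Rightarrow> real" where
  "cos_moment C s \<theta> = (LINT x|\<mu>. (1 + cos (s * x i + \<theta>)) * indicator C (restrict x I))"

lemma sets_slice_law: "sets (slice_law C) = sets borel"
  by (simp add: slice_law_def)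

lemma finite_measure_slice_law:
  assumes [measurable]: "C \<in> sets (Pi\<^sub>M I (\<lambda>_. lborel))"
  shows "finite_measure (slice_law C)"
  unfolding slice_law_def
proof (rule finite_measure.finite_measure_distr)
  have "emeasure (density \<mu> (\<lambda>x. ennreal (indicator C (restrict x I)))) (space \<mu>) =
      (\<integral>\<^sup>+x. ennreal (indicator C (restrict x I)) * indicator (space \<mu>) x \<partial>\<mu>)"
    by (rule emeasure_density) simp_all
  also have "\<dots> \<le> (\<integral>\<^sup>+x. indicator (space \<mu>) x \<partial>\<mu>)"
    by (intro nn_integral_mono) (simp split: split_indicator)
  finally have "emeasure (density \<mu> (\<lambda>x. ennreal (indicator C (restrict x I)))) (space \<mu>) \<le> emeasure \<mu> (space \<mu>)"
    by simp
  then show "finite_measure (density \<mu> (\<lambda>x. ennreal (indicator C (restrict x I))))"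
    using emeasure_finite[of "space \<mu>"] by (intro finite_measureI) (auto simp: top_unique)
qed simp

lemma emeasure_slice_law:
  assumes [measurable]: "C \<in> sets (Pi\<^sub>M I (\<lambda>_. lborel))" "B \<in> sets borel"
  shows "emeasure (slice_law C) B = emeasure \<mu> {x \<in> space \<mu>. x i \<in> B \<and> restrict x I \<in> C}"
proof -
  have "emeasure (slice_law C) B =
      (\<integral>\<^sup>+x. ennreal (indicator C (restrict x I)) * indicator ((\<lambda>x. x i) -` B \<inter> space \<mu>) x \<partial>\<mu>)"
    unfolding slice_law_def by (simp add: emeasure_distr emeasure_density del: ennreal_indicator)
  also have "\<dots> = (\<integral>\<^sup>+x. indicator {x \<in> space \<mu>. x i \<in> B \<and> restrict x I \<in> C} x \<partial>\<mu>)"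
    by (intro nn_integral_cong) (simp split: split_indicator)
  finally show ?thesis by simp
qed

text \<open>The phases \<theta> = 0 and \<theta> = - pi / 2 give the real and imaginary parts, and s = 0,
  \<theta> = pi / 2 gives the weight 1.\<close>

lemma char_slice_law:
  assumes [measurable]: "C \<in> sets (Pi\<^sub>M I (\<lambda>_. lborel))"
  shows "char (slice_law C) s =
    of_real (cos_moment C s 0 - cos_moment C 0 (pi / 2)) +
    \<i> * of_real (cos_moment C s (- (pi / 2)) - cos_moment C 0 (pi / 2))"
proof -
  define f where "f s \<theta> x = (1 + cos (s * x i + \<theta>)) * indicator C (restrict x I)" for s \<theta> x
  have "\<bar>1 + cos y\<bar> \<le> 2" for y :: real
    using cos_ge_minus_one[of y] cos_le_one[of y] by linarith
  then have integrable: "integrable \<mu> (f s \<theta>)" for s \<theta>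
    unfolding f_def by (intro integrable_const_bound[where B=2]) (simp_all add: abs_mult indicator_def)
  have moment: "cos_moment C s \<theta> = integral\<^sup>L \<mu> (f s \<theta>)" for s \<theta>
    unfolding cos_moment_def f_def ..
  have "char (slice_law C) s = (CLINT x|\<mu>. indicator C (restrict x I) *\<^sub>R iexp (s * x i))"
    unfolding char_def slice_law_def
    by (simp add: integral_distr integral_density del: ennreal_indicator)
  also have "\<dots> = (CLINT x|\<mu>. of_real (f s 0 x - f 0 (pi / 2) x) + \<i> * of_real (f s (- (pi / 2)) x - f 0 (pi / 2) x))"
    by (intro Bochner_Integration.integral_cong refl)
       (simp add: f_def complex_eq_iff Re_exp Im_exp cos_add cos_diff algebra_simps)
  also have "\<dots> = of_real (cos_moment C s 0 - cos_moment C 0 (pi / 2)) +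
      \<i> * of_real (cos_moment C s (- (pi / 2)) - cos_moment C 0 (pi / 2))"
    using integrable by (simp add: moment)
  finally show ?thesis .
qed

lemma cos_moment_eq_weighted_marginal:
  assumes "C \<in> sets (Pi\<^sub>M I (\<lambda>_. lborel))"
  shows "cos_moment C s \<theta> = (LINT y|weighted_marginal (\<lambda>y. 1 + cos (s * y + \<theta>)). indicator C y)"
proof -
  have "0 \<le> 1 + cos y" for y :: real
    using cos_ge_minus_one[of y] by linarith
  with assms show ?thesis
    unfolding cos_moment_def by (subst integral_indicator_weighted_marginal) simp_all
qed

end

lemma measure_eq_if_slice_laws_eq:
  fixes I :: "'i set"
  assumes "finite I" "i \<notin> I"
    and \<mu>: "finite_measure \<mu>" "sets \<mu> = sets (Pi\<^sub>M (insert i I) (\<lambda>_. lborel))"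
    and \<nu>: "finite_measure \<nu>" "sets \<nu> = sets (Pi\<^sub>M (insert i I) (\<lambda>_. lborel))"
    and slice_eq: "\<And>C. C \<in> sets (Pi\<^sub>M I (\<lambda>_. lborel)) \<Longrightarrow> slice_law I i \<mu> C = slice_law I i \<nu> C"
  shows "\<mu> = \<nu>"
proof (rule measure_eqI_PiM_finite[where A="\<lambda>_. space (Pi\<^sub>M (insert i I) (\<lambda>_. lborel))"])
  fix E :: "'i \<Rightarrow> real set"
  assume E: "\<And>j. j \<in> insert i I \<Longrightarrow> E j \<in> sets lborel"
  have C: "Pi\<^sub>E I E \<in> sets (Pi\<^sub>M I (\<lambda>_. lborel))"
    using E assms(1) by (intro sets_PiM_I_finite) auto
  have Ei: "E i \<in> sets borel"
    using E by simp
  have box: "{x \<in> space (Pi\<^sub>M (insert i I) (\<lambda>_. lborel)). x i \<in> E i \<and> restrict x I \<in> Pi\<^sub>E I E} =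
      Pi\<^sub>E (insert i I) E"
    using assms(2) by (auto simp: space_PiM PiE_iff extensional_def)
  have "emeasure \<mu> (Pi\<^sub>E (insert i I) E) = emeasure (slice_law I i \<mu> (Pi\<^sub>E I E)) (E i)"
    unfolding emeasure_slice_law[OF assms(1,2) \<mu> C Ei] sets_eq_imp_space_eq[OF \<mu>(2)] box ..
  also have "\<dots> = emeasure (slice_law I i \<nu> (Pi\<^sub>E I E)) (E i)"
    by (simp only: slice_eq[OF C])
  also have "\<dots> = emeasure \<nu> (Pi\<^sub>E (insert i I) E)"
    unfolding emeasure_slice_law[OF assms(1,2) \<nu> C Ei] sets_eq_imp_space_eq[OF \<nu>(2)] box ..
  finally show "emeasure \<mu> (Pi\<^sub>E (insert i I) E) = emeasure \<nu> (Pi\<^sub>E (insert i I) E)" .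
next
  show "range (\<lambda>_. space (Pi\<^sub>M (insert i I) (\<lambda>_. lborel))) \<subseteq> prod_algebra (insert i I) (\<lambda>_. lborel)"
    using prod_algebraI_finite[of "insert i I" "\<lambda>_. UNIV" "\<lambda>_. lborel"] assms(1)
    by (auto simp: space_PiM)
  show "emeasure \<mu> (space (Pi\<^sub>M (insert i I) (\<lambda>_. lborel))) \<noteq> \<infinity>"
    using finite_measure.emeasure_finite[OF \<mu>(1)] by simp
qed (use assms(1) \<mu>(2) \<nu>(2) in simp_all)

text \<open>The characteristic functions of the I-marginals
  reweighted by 1 + cos (s x i + \<theta>) are combinations of that of \<mu>, so these marginals agree
  by induction. Hence so do the cosine moments over the slabs where the I-coordinates lie in C,
  which determine the characteristic function of the law of x i on such a slab.\<close>

lemma char_vec_unique_insert: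
  fixes I :: "'i set"
  assumes "finite I" "i \<notin> I"
    and IH: "\<And>\<mu> \<nu>. finite_measure \<mu> \<Longrightarrow> finite_measure \<nu> \<Longrightarrow>
      sets \<mu> = sets (Pi\<^sub>M I (\<lambda>_. lborel)) \<Longrightarrow> sets \<nu> = sets (Pi\<^sub>M I (\<lambda>_. lborel)) \<Longrightarrow>
      char_vec I \<mu> = char_vec I \<nu> \<Longrightarrow> \<mu> = \<nu>"
    and \<mu>: "finite_measure \<mu>" "sets \<mu> = sets (Pi\<^sub>M (insert i I) (\<lambda>_. lborel))"
    and \<nu>: "finite_measure \<nu>" "sets \<nu> = sets (Pi\<^sub>M (insert i I) (\<lambda>_. lborel))"
    and char_eq: "char_vec (insert i I) \<mu> = char_vec (insert i I) \<nu>"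
  shows "\<mu> = \<nu>"
proof -
  note ctx_\<mu> = assms(1,2) \<mu> and ctx_\<nu> = assms(1,2) \<nu>
  have weighted_eq: "weighted_marginal I i \<mu> w = weighted_marginal I i \<nu> w"
    if w: "w = (\<lambda>y. 1 + cos (s * y + \<theta>))" for w s \<theta>
  proof (rule IH)
    have "w \<in> borel_measurable borel"
      using w by simp
    moreover have "w y \<le> 2" for y
      using w cos_le_one[of "s * y + \<theta>"] by simp
    ultimately show "finite_measure (weighted_marginal I i \<mu> w)" "finite_measure (weighted_marginal I i \<nu> w)"
      by (rule finite_measure_weighted_marginal[OF ctx_\<mu>] finite_measure_weighted_marginal[OF ctx_\<nu>])+
    show "sets (weighted_marginal I i \<mu> w) = sets (Pi\<^sub>M I (\<lambda>_. lborel))"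
      "sets (weighted_marginal I i \<nu> w) = sets (Pi\<^sub>M I (\<lambda>_. lborel))"
      by (rule sets_weighted_marginal[OF ctx_\<mu>] sets_weighted_marginal[OF ctx_\<nu>])+
    show "char_vec I (weighted_marginal I i \<mu> w) = char_vec I (weighted_marginal I i \<nu> w)"
      unfolding w char_vec_weighted_marginal_cos[OF ctx_\<mu>] char_vec_weighted_marginal_cos[OF ctx_\<nu>] char_eq ..
  qed
  show ?thesis
  proof (rule measure_eq_if_slice_laws_eq[OF assms(1,2) \<mu> \<nu>])
    fix C :: "('i \<Rightarrow> real) set"
    assume C: "C \<in> sets (Pi\<^sub>M I (\<lambda>_. lborel))"
    have "cos_moment I i \<mu> C s \<theta> = cos_moment I i \<nu> C s \<theta>" for s \<theta>
      unfolding cos_moment_eq_weighted_marginal[OF ctx_\<mu> C] cos_moment_eq_weighted_marginal[OF ctx_\<nu> C]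
      by (simp only: weighted_eq)
    then have "char (slice_law I i \<mu> C) = char (slice_law I i \<nu> C)"
      unfolding char_slice_law[OF ctx_\<mu> C] char_slice_law[OF ctx_\<nu> C] by simp
    with ctx_\<mu> ctx_\<nu> C show "slice_law I i \<mu> C = slice_law I i \<nu> C"
      by (intro finite_measure_char_unique finite_measure_slice_law sets_slice_law)
  qed
qed

theorem char_vec_unique:
  assumes "finite I" "finite_measure \<mu>" "finite_measure \<nu>"
    and "sets \<mu> = sets (Pi\<^sub>M I (\<lambda>_. lborel))" "sets \<nu> = sets (Pi\<^sub>M I (\<lambda>_. lborel))"
    and "char_vec I \<mu> = char_vec I \<nu>"
  shows "\<mu> = \<nu>"
  using assms
proof (induction I arbitrary: \<mu> \<nu> rule: finite_induct)
  case empty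
  have spaces: "space \<mu> = {\<lambda>_. undefined}" "space \<nu> = {\<lambda>_. undefined}"
    using sets_eq_imp_space_eq[OF empty.prems(3)] sets_eq_imp_space_eq[OF empty.prems(4)]
    by (simp_all add: PiM_empty)
  have "measure \<mu> (space \<mu>) = measure \<nu> (space \<nu>)"
    using fun_cong[OF empty.prems(5), of undefined] by (simp add: char_vec_def scaleR_conv_of_real)
  then have mass: "emeasure \<mu> (space \<mu>) = emeasure \<nu> (space \<nu>)"
    using empty.prems(1,2) by (simp add: finite_measure.emeasure_eq_measure)
  show ?case
  proof (rule measure_eqI)
    fix A assume "A \<in> sets \<mu>"
    then have "A \<subseteq> {\<lambda>_. undefined}"
      using sets.sets_into_space spaces by metis
    then consider "A = {}" | "A = space \<mu>"
      unfolding subset_singleton_iff spaces by blast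
    then show "emeasure \<mu> A = emeasure \<nu> A"
      by cases (use mass spaces in simp_all)
  qed (use empty.prems(3,4) in simp)
next
  case (insert i I)
  show ?case
    by (rule char_vec_unique_insert[OF insert.hyps insert.IH insert.prems(1,3,2,4,5)])
qed

section \<open>Unitriangular affine maps and products of normal laws\<close>

definition unitriangular_map ::
    "('i::linorder \<Rightarrow> real) \<Rightarrow> ('i \<Rightarrow> 'i \<Rightarrow> real) \<Rightarrow> 'i set \<Rightarrow> ('i \<Rightarrow> real) \<Rightarrow> ('i \<Rightarrow> real)" where
  "unitriangular_map a C I y = (\<lambda>j\<in>I. y j + a j + (\<Sum>k\<in>{k\<in>I. k < j}. C j k * y k))"

lemma measurable_unitriangular_map [measurable]:
  "unitriangular_map a C I \<in> measurable (Pi\<^sub>M I (\<lambda>_. lborel)) (Pi\<^sub>M I (\<lambda>_. lborel))"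
  unfolding unitriangular_map_def
proof (rule measurable_restrict)
  fix j assume "j \<in> I"
  then show "(\<lambda>y. y j + a j + (\<Sum>k\<in>{k\<in>I. k < j}. C j k * y k)) \<in> measurable (Pi\<^sub>M I (\<lambda>_. lborel)) lborel"
    unfolding measurable_lborel1 by measurable
qed

lemma unitriangular_map_insert_max:
  assumes "\<forall>k\<in>J. k < n"
  shows "unitriangular_map a C (insert n J) (x(n := y)) =
    (unitriangular_map a C J x)(n := y + a n + (\<Sum>k\<in>J. C n k * x k))"
proof
  fix j
  have n_notin: "n \<notin> J"
    using assms by auto
  have unchanged: "(\<Sum>k\<in>K. C j k * (x(n := y)) k) = (\<Sum>k\<in>K. C j k * x k)" if "K \<subseteq> J" for K
    using n_notin that by (intro sum.cong) auto
  consider "j = n" | "j \<in> J" | "j \<notin> insert n J"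
    by blast
  then show "unitriangular_map a C (insert n J) (x(n := y)) j =
      ((unitriangular_map a C J x)(n := y + a n + (\<Sum>k\<in>J. C n k * x k))) j"
  proof cases
    case 1
    moreover have "{k \<in> insert n J. k < n} = J"
      using assms by auto
    ultimately show ?thesis
      using unchanged[of J] by (simp add: unitriangular_map_def)
  next
    case 2
    then have "j \<noteq> n"
      using n_notin by auto
    moreover have "{k \<in> insert n J. k < j} = {k \<in> J. k < j}"
      using assms 2 by auto
    ultimately show ?thesis
      using 2 unchanged[of "{k \<in> J. k < j}"] by (simp add: unitriangular_map_def)
  qed (simp add: unitriangular_map_def)
qed

lemma nn_integral_unitriangular_map_insert_max:
  fixes f :: "('i::linorder \<Rightarrow> real) \<Rightarrow> ennreal"
  assumes "\<forall>k\<in>J. k < n" and [measurable]: "f \<in> borel_measurable (Pi\<^sub>M (insert n J) (\<lambda>_. lborel))"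
    and x: "x \<in> space (Pi\<^sub>M J (\<lambda>_. lborel))"
  shows "(\<integral>\<^sup>+ y. f (unitriangular_map a C (insert n J) (x(n := y))) \<partial>lborel) =
    (\<integral>\<^sup>+ y. f ((unitriangular_map a C J x)(n := y)) \<partial>lborel)"
proof -
  let ?b = "a n + (\<Sum>k\<in>J. C n k * x k)"
  have "n \<notin> J"
    using assms(1) by auto
  moreover have "unitriangular_map a C J x \<in> space (Pi\<^sub>M J (\<lambda>_. lborel))"
    using measurable_space[OF measurable_unitriangular_map x] .
  ultimately have "(\<lambda>y. f ((unitriangular_map a C J x)(n := y))) \<in> borel_measurable borel"
    using measurable_compose[OF measurable_component_update assms(2)] by (simp add: comp_def)
  then have "(\<integral>\<^sup>+ y. f ((unitriangular_map a C J x)(n := ?b + 1 * y)) \<partial>lborel) =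
      (\<integral>\<^sup>+ y. f ((unitriangular_map a C J x)(n := y)) \<partial>lborel)"
    using nn_integral_real_affine[of "\<lambda>y. f ((unitriangular_map a C J x)(n := y))" 1 ?b] by simp
  then show ?thesis
    using unitriangular_map_insert_max[OF assms(1)] by (simp add: add_ac)
qed

text \<open>By Fubini in the largest coordinate: with the other coordinates fixed, the map is a translation
  in that coordinate, and Lebesgue measure is translation invariant.\<close>

theorem distr_unitriangular_map_lborel:
  fixes I :: "'i::linorder set"
  assumes "finite I"
  shows "distr (Pi\<^sub>M I (\<lambda>_. lborel)) (Pi\<^sub>M I (\<lambda>_. lborel)) (unitriangular_map a C I) = Pi\<^sub>M I (\<lambda>_. lborel)"
  using assms
proof (induction I rule: finite_linorder_max_induct)
  case empty
  have "distr (Pi\<^sub>M {} (\<lambda>_. lborel)) (Pi\<^sub>M {} (\<lambda>_. lborel)) (unitriangular_map a C {}) =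
      distr (Pi\<^sub>M {} (\<lambda>_. lborel)) (Pi\<^sub>M {} (\<lambda>_. lborel)) (\<lambda>x. x)"
    by (rule distr_cong) (auto simp: unitriangular_map_def space_PiM)
  then show ?case
    by simp
next
  case (insert n J)
  interpret lborel_product: product_sigma_finite "\<lambda>_::'i. lborel :: real measure"
    by standard
  let ?P = "Pi\<^sub>M J (\<lambda>_. lborel :: real measure)"
  let ?P' = "Pi\<^sub>M (insert n J) (\<lambda>_. lborel :: real measure)"
  let ?T = "unitriangular_map a C"
  have n_notin: "n \<notin> J"
    using insert by auto
  show ?case
  proof (rule measure_eqI)
    fix X assume "X \<in> sets (distr ?P' ?P' (?T (insert n J)))"
    then have X [measurable]: "X \<in> sets ?P'"
      by simp
    have "(\<lambda>(u, y). indicator X (u(n := y)) :: ennreal) \<in> borel_measurable (?P \<Otimes>\<^sub>M lborel)"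
      using measurable_compose[OF measurable_add_dim borel_measurable_indicator[OF X]]
      by (simp add: case_prod_beta')
    then have [measurable]: "(\<lambda>u. \<integral>\<^sup>+ y. indicator X (u(n := y)) \<partial>lborel) \<in> borel_measurable ?P"
      by (rule lborel.borel_measurable_nn_integral[of "\<lambda>u y. indicator X (u(n := y))", simplified])
    have "emeasure (distr ?P' ?P' (?T (insert n J))) X = (\<integral>\<^sup>+ z. indicator (?T (insert n J) -` X \<inter> space ?P') z \<partial>?P')"
      by (simp add: emeasure_distr)
    also have "\<dots> = (\<integral>\<^sup>+ z. indicator X (?T (insert n J) z) \<partial>?P')"
      by (rule nn_integral_cong) (simp split: split_indicator)
    also have "\<dots> = (\<integral>\<^sup>+ x. (\<integral>\<^sup>+ y. indicator X (?T (insert n J) (x(n := y))) \<partial>lborel) \<partial>?P)"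
      by (rule lborel_product.product_nn_integral_insert[OF insert.hyps(1) n_notin]) simp
    also have "\<dots> = (\<integral>\<^sup>+ x. (\<integral>\<^sup>+ y. indicator X ((?T J x)(n := y)) \<partial>lborel) \<partial>?P)"
      using insert.hyps(2) by (intro nn_integral_cong nn_integral_unitriangular_map_insert_max) simp_all
    also have "\<dots> = (\<integral>\<^sup>+ u. (\<integral>\<^sup>+ y. indicator X (u(n := y)) \<partial>lborel) \<partial>distr ?P ?P (?T J))"
      by (rule nn_integral_distr[symmetric]) simp_all
    also have "\<dots> = (\<integral>\<^sup>+ z. indicator X z \<partial>?P')"
      unfolding insert.IH
      by (rule lborel_product.product_nn_integral_insert[OF insert.hyps(1) n_notin, symmetric]) simp
    finally show "emeasure (distr ?P' ?P' (?T (insert n J))) X = emeasure ?P' X"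
      by simp
  qed simp
qed

lemma prod_indicator_PiE:
  assumes "finite I" "x \<in> extensional I"
  shows "(\<Prod>j\<in>I. indicator (A j) (x j) :: ennreal) = indicator (Pi\<^sub>E I A) x"
  using assms by (auto simp: indicator_def PiE_iff prod_zero_iff)

lemma PiM_gauss_law_eq_density:
  fixes d :: "'i \<Rightarrow> real"
  assumes "finite I" and d: "\<And>j. 0 < d j"
  shows "Pi\<^sub>M I (\<lambda>j. gauss_law 0 (d j)) =
    density (Pi\<^sub>M I (\<lambda>_. lborel)) (\<lambda>x. \<Prod>j\<in>I. ennreal (normal_density 0 (sqrt (d j)) (x j)))"
proof -
  interpret lborel_product: product_sigma_finite "\<lambda>_::'i. lborel :: real measure"
    by standard
  interpret gauss_product: product_prob_space "\<lambda>j. gauss_law 0 (d j)" I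
    using real_distribution_gauss_law[of "d j" 0 for j] d
    by (simp add: product_prob_space_def product_sigma_finite_def product_prob_space_axioms_def
        real_distribution_def prob_space_imp_sigma_finite less_imp_le)
  have gauss_density: "gauss_law 0 (d j) = density lborel (normal_density 0 (sqrt (d j)))" for j
    using d[of j] by (simp add: gauss_law_def)
  show ?thesis
  proof (rule gauss_product.PiM_eqI[symmetric, OF assms(1)])
    fix A assume A: "\<And>j. j \<in> I \<Longrightarrow> A j \<in> sets (gauss_law 0 (d j))"
    then have "Pi\<^sub>E I A \<in> sets (Pi\<^sub>M I (\<lambda>_. lborel))"
      using assms(1) by (intro sets_PiM_I_finite) auto
    then have "emeasure (density (Pi\<^sub>M I (\<lambda>_. lborel)) (\<lambda>x. \<Prod>j\<in>I. ennreal (normal_density 0 (sqrt (d j)) (x j)))) (Pi\<^sub>E I A)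
      = (\<integral>\<^sup>+x. (\<Prod>j\<in>I. ennreal (normal_density 0 (sqrt (d j)) (x j))) * indicator (Pi\<^sub>E I A) x \<partial>Pi\<^sub>M I (\<lambda>_. lborel))"
      by (rule emeasure_density[rotated]) measurable
    also have "\<dots> = (\<integral>\<^sup>+x. (\<Prod>j\<in>I. ennreal (normal_density 0 (sqrt (d j)) (x j)) * indicator (A j) (x j)) \<partial>Pi\<^sub>M I (\<lambda>_. lborel))"
      using assms(1) by (intro nn_integral_cong) (simp add: prod.distrib prod_indicator_PiE space_PiM PiE_iff)
    also have "\<dots> = (\<Prod>j\<in>I. (\<integral>\<^sup>+y. ennreal (normal_density 0 (sqrt (d j)) y) * indicator (A j) y \<partial>lborel))"
      using A by (intro lborel_product.product_nn_integral_prod assms(1)) auto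
    also have "\<dots> = (\<Prod>j\<in>I. emeasure (gauss_law 0 (d j)) (A j))"
      using A by (intro prod.cong refl) (simp add: gauss_density emeasure_density)
    finally show "emeasure (density (Pi\<^sub>M I (\<lambda>_. lborel)) (\<lambda>x. \<Prod>j\<in>I. ennreal (normal_density 0 (sqrt (d j)) (x j)))) (Pi\<^sub>E I A)
      = (\<Prod>j\<in>I. emeasure (gauss_law 0 (d j)) (A j))" .
  qed (simp only: sets_density, rule sets_PiM_cong; simp)
qed

corollary absolutely_continuous_PiM_gauss_law:
  assumes "finite I" "\<And>j. 0 < d j"
  shows "absolutely_continuous (Pi\<^sub>M I (\<lambda>_. lborel)) (Pi\<^sub>M I (\<lambda>j. gauss_law 0 (d j)))"
  unfolding PiM_gauss_law_eq_density[OF assms]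
  by (rule absolutely_continuousI_density) measurable

section \<open>Quadratic forms\<close>

lemma quadratic_nonneg_imp_linear_coeff_0:
  fixes b g :: real
  assumes nonneg: "\<And>s. 0 \<le> 2 * s * b + s\<^sup>2 * g"
  shows "b = 0"
proof -
  have "0 \<le> g"
    using nonneg[of 1] nonneg[of "-1"] by simp
  text \<open>At s = - b / (g + 1) the polynomial is negative unless b = 0.\<close>
  have "0 \<le> 2 * (- b / (g + 1)) * b + (- b / (g + 1))\<^sup>2 * g"
    by (rule nonneg)
  also have "\<dots> = - (b\<^sup>2 * (g + 2)) / (g + 1)\<^sup>2"
    using \<open>0 \<le> g\<close> by (simp add: divide_simps) algebra
  finally have "b\<^sup>2 * (g + 2) / (g + 1)\<^sup>2 \<le> 0"
    by simp
  moreover have "0 < (g + 1)\<^sup>2"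
    using \<open>0 \<le> g\<close> by simp
  ultimately have "b\<^sup>2 * (g + 2) \<le> 0"
    by (simp add: divide_le_0_iff)
  with \<open>0 \<le> g\<close> show "b = 0"
    by (simp add: mult_le_0_iff)
qed

lemma quadratic_form_update:
  fixes G :: "nat \<Rightarrow> nat \<Rightarrow> real"
  assumes sym: "\<And>d d'. G d d' = G d' d" and "i < n"
  shows "(\<Sum>d<n. \<Sum>d'<n. (x(i := x i + s)) d * (x(i := x i + s)) d' * G d d') =
    (\<Sum>d<n. \<Sum>d'<n. x d * x d' * G d d') + 2 * s * (\<Sum>d<n. G i d * x d) + s\<^sup>2 * G i i"
proof -
  define e where "e = (\<lambda>d. if d = i then 1 else 0 :: real)"
  have update: "x(i := x i + s) = (\<lambda>d. x d + s * e d)"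
    by (auto simp: e_def)
  have diag: "(\<Sum>d<n. \<Sum>d'<n. e d * e d' * G d d') = G i i"
  proof -
    have "e d * e d' * G d d' = (if d' = i then (if d = i then G i i else 0) else 0)" for d d'
      by (simp add: e_def)
    then show ?thesis
      using \<open>i < n\<close> by (simp add: sum.delta)
  qed
  have cross: "(\<Sum>d<n. \<Sum>d'<n. e d * x d' * G d d') = (\<Sum>d<n. G i d * x d)"
    "(\<Sum>d<n. \<Sum>d'<n. x d * e d' * G d d') = (\<Sum>d<n. G i d * x d)"
  proof -
    have "e d * x d' * G d d' = (if d = i then x d' * G i d' else 0)" for d d'
      by (simp add: e_def)
    then show "(\<Sum>d<n. \<Sum>d'<n. e d * x d' * G d d') = (\<Sum>d<n. G i d * x d)"
      using \<open>i < n\<close> by (subst sum.swap) (simp add: sum.delta mult.commute)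
    have "x d * e d' * G d d' = (if d' = i then x d * G d i else 0)" for d d'
      by (simp add: e_def)
    then show "(\<Sum>d<n. \<Sum>d'<n. x d * e d' * G d d') = (\<Sum>d<n. G i d * x d)"
      using \<open>i < n\<close> by (simp add: sum.delta sym[of _ i] mult.commute)
  qed
  have "(\<Sum>d<n. \<Sum>d'<n. (x d + s * e d) * (x d' + s * e d') * G d d') =
      (\<Sum>d<n. \<Sum>d'<n. x d * x d' * G d d' + s * (e d * x d' * G d d') +
        s * (x d * e d' * G d d') + s\<^sup>2 * (e d * e d' * G d d'))"
    by (intro sum.cong refl) (simp add: algebra_simps power2_eq_square)
  then show ?thesis
    unfolding update by (simp add: sum.distrib sum_distrib_left[symmetric] cross diag)
qed

lemma psd_quadratic_form_zero_imp_kernel: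
  fixes G :: "nat \<Rightarrow> nat \<Rightarrow> real"
  assumes psd: "\<And>x. 0 \<le> (\<Sum>d<n. \<Sum>d'<n. x d * x d' * G d d')"
    and sym: "\<And>d d'. G d d' = G d' d"
    and zero: "(\<Sum>d<n. \<Sum>d'<n. x d * x d' * G d d') = 0"
    and "i < n"
  shows "(\<Sum>d<n. G i d * x d) = 0"
proof (rule quadratic_nonneg_imp_linear_coeff_0)
  fix s
  show "0 \<le> 2 * s * (\<Sum>d<n. G i d * x d) + s\<^sup>2 * G i i"
    using psd[of "x(i := x i + s)"] quadratic_form_update[OF sym \<open>i < n\<close>, of x s] zero by simp
qed

lemma sum_lower_triangle_swap:
  fixes r :: nat
  shows "(\<Sum>j\<in>{1..r}. \<Sum>k\<in>{1..<j}. f j k) = (\<Sum>k\<in>{1..r}. \<Sum>j\<in>{k<..r}. f j k :: 'a::comm_monoid_add)"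
proof -
  have "(\<Sum>j\<in>{1..r}. \<Sum>k\<in>{1..<j}. f j k) = (\<Sum>j\<in>{1..r}. \<Sum>k\<in>{k\<in>{1..r}. k < j}. f j k)"
    by (intro sum.cong refl) fastforce
  also have "\<dots> = (\<Sum>k\<in>{1..r}. \<Sum>j\<in>{j\<in>{1..r}. k < j}. f j k)"
    by (rule sum.swap_restrict) simp_all
  also have "\<dots> = (\<Sum>k\<in>{1..r}. \<Sum>j\<in>{k<..r}. f j k)"
    by (intro sum.cong) auto
  finally show ?thesis .
qed

definition unit_vec :: "nat \<Rightarrow> nat \<Rightarrow> real" where
  "unit_vec j = (\<lambda>p. if p = j then 1 else 0)"

function gram_schmidt :: "((nat \<Rightarrow> real) \<Rightarrow> (nat \<Rightarrow> real) \<Rightarrow> real) \<Rightarrow> nat \<Rightarrow> nat \<Rightarrow> real" where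
  "gram_schmidt B j = (\<lambda>p. unit_vec j p -
     (\<Sum>k\<in>{1..<j}. B (unit_vec j) (gram_schmidt B k) / B (gram_schmidt B k) (gram_schmidt B k) * gram_schmidt B k p))"
  by pat_completeness auto
termination by (relation "Wellfounded.measure (\<lambda>(B, j). j)") auto

declare gram_schmidt.simps [simp del]

definition gs_coeff :: "((nat \<Rightarrow> real) \<Rightarrow> (nat \<Rightarrow> real) \<Rightarrow> real) \<Rightarrow> nat \<Rightarrow> nat \<Rightarrow> real" where
  "gs_coeff B j k = B (unit_vec j) (gram_schmidt B k) / B (gram_schmidt B k) (gram_schmidt B k)"

lemma gram_schmidt_eq:
  "gram_schmidt B j = (\<lambda>p. unit_vec j p - (\<Sum>k\<in>{1..<j}. gs_coeff B j k * gram_schmidt B k p))"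
  by (subst gram_schmidt.simps) (simp add: gs_coeff_def)

lemma unit_vec_eq_gram_schmidt:
  "unit_vec j p = gram_schmidt B j p + (\<Sum>k\<in>{1..<j}. gs_coeff B j k * gram_schmidt B k p)"
  by (simp add: gram_schmidt_eq[of B j])

lemma gram_schmidt_eq_0: "1 \<le> j \<Longrightarrow> j < p \<or> p = 0 \<Longrightarrow> gram_schmidt B j p = 0"
proof (induction j rule: less_induct)
  case (less j)
  then have "(\<Sum>k\<in>{1..<j}. gs_coeff B j k * gram_schmidt B k p) = 0"
    by (intro sum.neutral) auto
  moreover have "p \<noteq> j"
    using less.prems by auto
  ultimately show ?case
    using unit_vec_eq_gram_schmidt[of j p B] by (simp add: unit_vec_def)
qed

lemma gram_schmidt_diag: "1 \<le> j \<Longrightarrow> gram_schmidt B j j = 1"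
  using unit_vec_eq_gram_schmidt[of j j B] by (simp add: unit_vec_def gram_schmidt_eq_0 sum.neutral)

lemma unit_vec_expansion_gram_schmidt:
  fixes r :: nat
  shows "(\<Sum>j\<in>{1..r}. t j * unit_vec j p) =
    (\<Sum>k\<in>{1..r}. (t k + (\<Sum>j\<in>{k<..r}. t j * gs_coeff B j k)) * gram_schmidt B k p)"
proof -
  have "(\<Sum>j\<in>{1..r}. t j * unit_vec j p) =
      (\<Sum>j\<in>{1..r}. t j * gram_schmidt B j p) + (\<Sum>j\<in>{1..r}. \<Sum>k\<in>{1..<j}. t j * gs_coeff B j k * gram_schmidt B k p)"
    by (simp add: unit_vec_eq_gram_schmidt[of _ p B] algebra_simps sum.distrib sum_distrib_left)
  also have "\<dots> = (\<Sum>k\<in>{1..r}. t k * gram_schmidt B k p) + (\<Sum>k\<in>{1..r}. \<Sum>j\<in>{k<..r}. t j * gs_coeff B j k * gram_schmidt B k p)"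
    by (simp only: sum_lower_triangle_swap)
  finally show ?thesis
    by (simp add: algebra_simps sum.distrib sum_distrib_left sum_distrib_right)
qed

text \<open>Positive definiteness only concerns the coordinates in {1..r}, on which B alone depends.\<close>

locale pos_def_form =
  fixes r :: nat and B :: "(nat \<Rightarrow> real) \<Rightarrow> (nat \<Rightarrow> real) \<Rightarrow> real"
  assumes sym: "B u w = B w u"
    and linear: "B u (\<lambda>p. a * w p + b * w' p) = a * B u w + b * B u w'"
    and pos_def: "\<exists>p\<in>{1..r}. u p \<noteq> 0 \<Longrightarrow> 0 < B u u"
    and coordinates: "\<forall>p\<in>{1..r}. u p = u' p \<Longrightarrow> B u w = B u' w"
begin

lemma sum_right: "finite K \<Longrightarrow> B u (\<lambda>p. \<Sum>k\<in>K. c k * w k p) = (\<Sum>k\<in>K. c k * B u (w k))"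
proof (induction K rule: finite_induct)
  case empty
  then show ?case
    using linear[of u 0 "\<lambda>p. 0" 0 "\<lambda>p. 0"] by simp
next
  case (insert k K)
  then show ?case
    using linear[of u "c k" "w k" 1 "\<lambda>p. \<Sum>k\<in>K. c k * w k p"] by simp
qed

lemma diff_right: "B u (\<lambda>p. f p - g p) = B u f - B u g"
  using linear[of u 1 f "-1" g] by simp

lemma gram_schmidt_pos: "k \<in> {1..r} \<Longrightarrow> 0 < B (gram_schmidt B k) (gram_schmidt B k)"
  by (rule pos_def) (auto intro!: bexI[of _ k] simp: gram_schmidt_diag)

lemma gram_schmidt_orthogonal:
  assumes "k \<in> {1..r}" "k' \<in> {1..r}" "k \<noteq> k'"
  shows "B (gram_schmidt B k) (gram_schmidt B k') = 0"
proof -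
  have "B (gram_schmidt B j) (gram_schmidt B k) = 0" if "1 \<le> k" "k < j" "j \<le> r" for j k
    using that
  proof (induction j arbitrary: k rule: less_induct)
    case (less j)
    have orth: "B (gram_schmidt B k) (gram_schmidt B k') = 0" if "k' \<in> {1..<j}" "k' \<noteq> k" for k'
      using less.IH[of k k'] less.IH[of k' k] less.prems that sym
      by (cases "k' < k") auto
    have k: "k \<in> {1..<j}"
      using less.prems by auto
    have "B (gram_schmidt B j) (gram_schmidt B k) = B (gram_schmidt B k) (gram_schmidt B j)"
      by (rule sym)
    also have "\<dots> = B (gram_schmidt B k) (unit_vec j) -
        (\<Sum>k'\<in>{1..<j}. gs_coeff B j k' * B (gram_schmidt B k) (gram_schmidt B k'))"
      using gram_schmidt_eq[of B j] by (simp only: diff_right sum_right finite_atLeastLessThan)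
    also have "(\<Sum>k'\<in>{1..<j}. gs_coeff B j k' * B (gram_schmidt B k) (gram_schmidt B k')) =
        gs_coeff B j k * B (gram_schmidt B k) (gram_schmidt B k)"
      using k by (subst sum.remove[of _ k]) (auto intro!: sum.neutral simp: orth)
    also have "\<dots> = B (gram_schmidt B k) (unit_vec j)"
      using gram_schmidt_pos[of k] less.prems by (simp add: gs_coeff_def sym)
    finally show ?case
      by simp
  qed
  note lower = this
  consider "k < k'" | "k' < k"
    using assms(3) by linarith
  then show ?thesis
    by cases (use assms lower[of k' k] lower[of k k'] sym in auto)
qed

theorem quadratic_form_eq_sum_squares:
  "B t t = (\<Sum>k\<in>{1..r}. (t k + (\<Sum>j\<in>{k<..r}. t j * gs_coeff B j k))\<^sup>2 * B (gram_schmidt B k) (gram_schmidt B k))"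
proof -
  define c where "c k = t k + (\<Sum>j\<in>{k<..r}. t j * gs_coeff B j k)" for k
  define u where "u p = (\<Sum>k\<in>{1..r}. c k * gram_schmidt B k p)" for p
  have "(\<Sum>j\<in>{1..r}. t j * unit_vec j p) = u p" for p
    unfolding u_def c_def by (rule unit_vec_expansion_gram_schmidt)
  moreover have "(\<Sum>j\<in>{1..r}. t j * unit_vec j p) = t p" if "p \<in> {1..r}" for p
    using that by (simp add: unit_vec_def if_distrib[of "\<lambda>x. t _ * x"] sum.delta cong: if_cong)
  ultimately have t_u: "\<forall>p\<in>{1..r}. t p = u p"
    by simp
  have B_u: "B w u = (\<Sum>k\<in>{1..r}. c k * B w (gram_schmidt B k))" for w
  proof -
    have "u = (\<lambda>p. \<Sum>k\<in>{1..r}. c k * gram_schmidt B k p)"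
      by (simp add: u_def fun_eq_iff)
    then show ?thesis
      by (simp add: sum_right)
  qed
  have "B t t = B u u"
    using coordinates[OF t_u, of t] coordinates[OF t_u, of u] sym[of t u] by simp
  also have "\<dots> = (\<Sum>k\<in>{1..r}. c k * B (gram_schmidt B k) u)"
    unfolding B_u[of u] by (simp add: sym)
  also have "\<dots> = (\<Sum>k\<in>{1..r}. c k * (\<Sum>k'\<in>{1..r}. c k' * B (gram_schmidt B k) (gram_schmidt B k')))"
    by (simp only: B_u)
  also have "\<dots> = (\<Sum>k\<in>{1..r}. c k * (c k * B (gram_schmidt B k) (gram_schmidt B k)))"
    by (intro sum.cong refl, subst sum.remove) (auto intro!: sum.neutral simp: gram_schmidt_orthogonal)
  finally show ?thesis
    by (simp add: c_def power2_eq_square mult.assoc)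
qed

end

section \<open>Absolutely continuous Gaussian vectors\<close>

lemma (in prob_space) char_vec_distr_eq_char:
  assumes "finite I" "\<And>j. j \<in> I \<Longrightarrow> X j \<in> borel_measurable M"
  shows "char_vec I (distr M (Pi\<^sub>M I (\<lambda>_. lborel)) (\<lambda>\<omega>. \<lambda>j\<in>I. X j \<omega>)) t =
    char (distr M borel (\<lambda>\<omega>. \<Sum>j\<in>I. t j * X j \<omega>)) 1"
proof -
  have X_vec: "(\<lambda>\<omega>. \<lambda>j\<in>I. X j \<omega>) \<in> measurable M (Pi\<^sub>M I (\<lambda>_. lborel))"
    using assms(2) by (intro measurable_restrict) simp
  have "(\<lambda>\<omega>. \<Sum>j\<in>I. t j * X j \<omega>) \<in> borel_measurable M"
    using assms(2) by simp
  then show ?thesis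
    unfolding char_vec_def char_def
    by (simp add: integral_distr[OF X_vec] integral_distr cong: sum.cong)
qed

lemma (in prob_space) char_vec_gaussian_vector:
  assumes "finite I" "\<And>j. j \<in> I \<Longrightarrow> X j \<in> borel_measurable M" "0 \<le> Q t"
    and "distr M borel (\<lambda>\<omega>. \<Sum>j\<in>I. t j * X j \<omega>) = gauss_law (\<Sum>j\<in>I. t j * m j) (Q t)"
  shows "char_vec I (distr M (Pi\<^sub>M I (\<lambda>_. lborel)) (\<lambda>\<omega>. \<lambda>j\<in>I. X j \<omega>)) t =
    iexp (\<Sum>j\<in>I. t j * m j) * exp (- Q t / 2)"
proof -
  have "char_vec I (distr M (Pi\<^sub>M I (\<lambda>_. lborel)) (\<lambda>\<omega>. \<lambda>j\<in>I. X j \<omega>)) t =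
      char (gauss_law (\<Sum>j\<in>I. t j * m j) (Q t)) 1"
    using assms(1,2,4) by (simp only: char_vec_distr_eq_char)
  then show ?thesis
    using assms(3) by (simp add: char_gauss_law)
qed

lemma char_vec_PiM_gauss_law:
  assumes "finite I" "\<And>j. 0 \<le> d j"
  shows "char_vec I (Pi\<^sub>M I (\<lambda>j. gauss_law 0 (d j))) t = exp (- (\<Sum>j\<in>I. d j * (t j)\<^sup>2) / 2)"
proof -
  interpret gauss_product: product_prob_space "\<lambda>j. gauss_law 0 (d j)" I
    using real_distribution_gauss_law[of "d j" 0 for j] assms(2)
    by (simp add: product_prob_space_def product_sigma_finite_def product_prob_space_axioms_def
        real_distribution_def prob_space_imp_sigma_finite)
  have "char_vec I (Pi\<^sub>M I (\<lambda>j. gauss_law 0 (d j))) t =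
      (CLINT x|Pi\<^sub>M I (\<lambda>j. gauss_law 0 (d j)). (\<Prod>j\<in>I. iexp (t j * x j)))"
    unfolding char_vec_def using assms(1)
    by (simp add: sum_distrib_left exp_sum)
  also have "\<dots> = (\<Prod>j\<in>I. char (gauss_law 0 (d j)) (t j))"
    unfolding char_def using assms(1)
    by (intro gauss_product.product_integral_prod prob_space.integrable_iexp)
       (simp_all add: real_distribution_gauss_law[THEN real_distribution.axioms(1)] assms(2))
  also have "\<dots> = (\<Prod>j\<in>I. complex_of_real (exp (- (d j * (t j)\<^sup>2) / 2)))"
    by (intro prod.cong refl) (simp add: char_gauss_law assms(2))
  also have "\<dots> = complex_of_real (exp (\<Sum>j\<in>I. - (d j * (t j)\<^sup>2) / 2))"
    using assms(1) by (simp only: exp_sum of_real_prod)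
  also have "(\<Sum>j\<in>I. - (d j * (t j)\<^sup>2) / 2) = - (\<Sum>j\<in>I. d j * (t j)\<^sup>2) / 2"
    by (simp add: sum_negf sum_divide_distrib)
  finally show ?thesis .
qed

lemma linear_unitriangular_map:
  fixes t z a :: "nat \<Rightarrow> real"
  shows "(\<Sum>j\<in>{1..r}. t j * unitriangular_map a C {1..r} z j) =
    (\<Sum>j\<in>{1..r}. t j * a j) + (\<Sum>k\<in>{1..r}. (t k + (\<Sum>j\<in>{k<..r}. t j * C j k)) * z k)"
proof -
  have "{k \<in> {1..r}. k < j} = {1..<j}" if "j \<in> {1..r}" for j
    using that by auto
  then have "(\<Sum>j\<in>{1..r}. t j * unitriangular_map a C {1..r} z j) =
      (\<Sum>j\<in>{1..r}. t j * z j + t j * a j + (\<Sum>k\<in>{1..<j}. t j * C j k * z k))"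
    by (intro sum.cong refl) (simp add: unitriangular_map_def algebra_simps sum_distrib_left)
  also have "\<dots> = (\<Sum>j\<in>{1..r}. t j * z j) + (\<Sum>j\<in>{1..r}. t j * a j) +
      (\<Sum>k\<in>{1..r}. \<Sum>j\<in>{k<..r}. t j * C j k * z k)"
    by (simp only: sum.distrib sum_lower_triangle_swap)
  finally show ?thesis
    by (simp add: algebra_simps sum.distrib sum_distrib_left sum_distrib_right)
qed

lemma absolutely_continuous_distr_measure_preserving:
  assumes "absolutely_continuous L G" "sets G = sets L"
    and T: "T \<in> measurable L L" and preserving: "distr L L T = L"
  shows "absolutely_continuous L (distr G L T)"
  unfolding absolutely_continuous_def
proof
  fix N assume N: "N \<in> null_sets L"
  then have "N \<in> null_sets (distr L L T)"
    using preserving by simp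
  then have "T -` N \<inter> space L \<in> null_sets L"
    by (simp add: null_sets_distr_iff[OF T])
  then have "T -` N \<inter> space G \<in> null_sets G"
    using assms(1) sets_eq_imp_space_eq[OF assms(2)] by (auto simp: absolutely_continuous_def)
  moreover have "T \<in> measurable G L"
    using T by (simp add: measurable_cong_sets[OF assms(2) refl])
  ultimately show "N \<in> null_sets (distr G L T)"
    using N by (simp add: null_sets_distr_iff null_setsD2)
qed

lemma char_vec_unitriangular_gauss:
  fixes r :: nat
  assumes "\<And>k. 0 \<le> d k"
  shows "char_vec {1..r} (distr (Pi\<^sub>M {1..r} (\<lambda>k. gauss_law 0 (d k))) (Pi\<^sub>M {1..r} (\<lambda>_. lborel))
      (unitriangular_map a C {1..r})) t =
    iexp (\<Sum>j\<in>{1..r}. t j * a j) * exp (- (\<Sum>k\<in>{1..r}. d k * (t k + (\<Sum>j\<in>{k<..r}. t j * C j k))\<^sup>2) / 2)"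
proof -
  define G where "G = Pi\<^sub>M {1..r} (\<lambda>k. gauss_law 0 (d k))"
  define c where "c k = t k + (\<Sum>j\<in>{k<..r}. t j * C j k)" for k
  let ?T = "unitriangular_map a C {1..r}"
  have sets_G: "sets G = sets (Pi\<^sub>M {1..r} (\<lambda>_. lborel))"
    unfolding G_def by (rule sets_PiM_cong) simp_all
  have "char_vec {1..r} (distr G (Pi\<^sub>M {1..r} (\<lambda>_. lborel)) ?T) t = (CLINT z|G. iexp (\<Sum>j\<in>{1..r}. t j * ?T z j))"
    unfolding char_vec_def by (subst integral_distr) (simp_all add: measurable_cong_sets[OF sets_G refl])
  also have "\<dots> = (CLINT z|G. iexp (\<Sum>j\<in>{1..r}. t j * a j) * iexp (\<Sum>k\<in>{1..r}. c k * z k))"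
  proof (rule Bochner_Integration.integral_cong[OF refl])
    fix z
    have "(\<Sum>j\<in>{1..r}. t j * ?T z j) = (\<Sum>j\<in>{1..r}. t j * a j) + (\<Sum>k\<in>{1..r}. c k * z k)"
      unfolding c_def by (rule linear_unitriangular_map)
    then show "iexp (\<Sum>j\<in>{1..r}. t j * ?T z j) = iexp (\<Sum>j\<in>{1..r}. t j * a j) * iexp (\<Sum>k\<in>{1..r}. c k * z k)"
      by (simp only: of_real_add distrib_left exp_add)
  qed
  also have "\<dots> = iexp (\<Sum>j\<in>{1..r}. t j * a j) * char_vec {1..r} G c"
    by (simp add: char_vec_def)
  also have "char_vec {1..r} G c = exp (- (\<Sum>k\<in>{1..r}. d k * (c k)\<^sup>2) / 2)"
    unfolding G_def by (rule char_vec_PiM_gauss_law) (simp_all add: assms)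
  finally show ?thesis
    by (simp only: G_def c_def)
qed

text \<open>The law of X is identified, through its characteristic function, with the image of a
  product of centred normal laws under a unitriangular affine map.\<close>

theorem absolutely_continuous_gaussian_vector:
  fixes X :: "nat \<Rightarrow> 'a \<Rightarrow> real"
  assumes "prob_space M" "pos_def_form r B"
    and X: "\<And>j. j \<in> {1..r} \<Longrightarrow> X j \<in> borel_measurable M"
    and law: "\<And>t. distr M borel (\<lambda>\<omega>. \<Sum>j\<in>{1..r}. t j * X j \<omega>) = gauss_law (\<Sum>j\<in>{1..r}. t j * m j) (B t t)"
  shows "absolutely_continuous (Pi\<^sub>M {1..r} (\<lambda>_. lborel))
           (distr M (Pi\<^sub>M {1..r} (\<lambda>_. lborel)) (\<lambda>\<omega>. \<lambda>j\<in>{1..r}. X j \<omega>))"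
proof -
  interpret prob_space M by fact
  interpret pos_def_form r B by fact
  let ?L = "Pi\<^sub>M {1..r} (\<lambda>_. lborel :: real measure)"
  let ?T = "unitriangular_map m (gs_coeff B) {1..r}"
  define d where "d k = (if k \<in> {1..r} then B (gram_schmidt B k) (gram_schmidt B k) else 1)" for k
  have d_pos: "0 < d k" for k
    using gram_schmidt_pos by (simp add: d_def)
  define G where "G = Pi\<^sub>M {1..r} (\<lambda>k. gauss_law 0 (d k))"
  have sets_G: "sets G = sets ?L"
    unfolding G_def by (rule sets_PiM_cong) simp_all
  have B_nonneg: "0 \<le> B t t" for t
    unfolding quadratic_form_eq_sum_squares[of t]
    by (intro sum_nonneg mult_nonneg_nonneg) (simp_all add: less_imp_le gram_schmidt_pos)
  have char_X: "char_vec {1..r} (distr M ?L (\<lambda>\<omega>. \<lambda>j\<in>{1..r}. X j \<omega>)) t =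
      iexp (\<Sum>j\<in>{1..r}. t j * m j) * exp (- B t t / 2)" for t
    using B_nonneg X law by (intro char_vec_gaussian_vector) simp_all
  have char_ref: "char_vec {1..r} (distr G ?L ?T) t = iexp (\<Sum>j\<in>{1..r}. t j * m j) * exp (- B t t / 2)" for t
  proof -
    have "(\<Sum>k\<in>{1..r}. d k * (t k + (\<Sum>j\<in>{k<..r}. t j * gs_coeff B j k))\<^sup>2) = B t t"
      unfolding quadratic_form_eq_sum_squares[of t] by (intro sum.cong refl) (simp add: d_def)
    then show ?thesis
      unfolding G_def using less_imp_le[OF d_pos] by (simp only: char_vec_unitriangular_gauss)
  qed
  have "distr M ?L (\<lambda>\<omega>. \<lambda>j\<in>{1..r}. X j \<omega>) = distr G ?L ?T"
  proof (rule char_vec_unique)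
    show "finite_measure (distr M ?L (\<lambda>\<omega>. \<lambda>j\<in>{1..r}. X j \<omega>))"
      using X by (intro finite_measure_distr measurable_restrict) simp
    show "finite_measure (distr G ?L ?T)"
      using d_pos real_distribution_gauss_law[of "d k" 0 for k]
      by (intro finite_measure.finite_measure_distr prob_space.finite_measure)
         (simp_all add: G_def prob_space_PiM real_distribution_def less_imp_le
           measurable_cong_sets[OF sets_G refl])
    show "char_vec {1..r} (distr M ?L (\<lambda>\<omega>. \<lambda>j\<in>{1..r}. X j \<omega>)) = char_vec {1..r} (distr G ?L ?T)"
      by (rule ext) (simp only: char_X char_ref)
  qed simp_all
  moreover have "absolutely_continuous ?L (distr G ?L ?T)"
    using sets_G
    by (intro absolutely_continuous_distr_measure_preserving distr_unitriangular_map_lborel)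
       (simp_all add: G_def absolutely_continuous_PiM_gauss_law d_pos)
  ultimately show ?thesis
    by simp
qed

section \<open>Test functions and white noise\<close>

lemma deriv_eq_0_outside:
  fixes f :: "real \<Rightarrow> real"
  assumes "\<And>x. x \<notin> {a..b} \<Longrightarrow> f x = 0" "x \<notin> {a..b}"
  shows "deriv f x = 0"
proof -
  have "((\<lambda>_. 0) has_real_derivative 0) (at x)"
    by simp
  moreover have "open (- {a..b})" "x \<in> - {a..b}"
    using assms(2) by auto
  ultimately have "(f has_real_derivative 0) (at x)"
    by (rule has_field_derivative_transform_within_open) (use assms(1) in auto)
  then show ?thesis
    by (rule DERIV_imp_deriv)
qed

lemma test_fun_deriv:
  assumes "test_fun \<phi>"
  shows "test_fun ((deriv ^^ d) \<phi>)"
proof -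
  obtain a b where ab: "0 < a" "a \<le> b" "\<And>x. x \<notin> {a..b} \<Longrightarrow> \<phi> x = 0"
    using assms unfolding test_fun_def by blast
  have "(deriv ^^ d) \<phi> x = 0" if "x \<notin> {a..b}" for x
    using that
  proof (induction d arbitrary: x)
    case (Suc d)
    then show ?case
      using deriv_eq_0_outside[of a b "(deriv ^^ d) \<phi>"] by simp
  qed (simp add: ab)
  moreover have "((deriv ^^ k) ((deriv ^^ d) \<phi>)) differentiable (at x)" for k x
  proof -
    have "(deriv ^^ k) ((deriv ^^ d) \<phi>) = (deriv ^^ (k + d)) \<phi>"
      by (simp add: funpow_add)
    with assms show ?thesis
      unfolding test_fun_def by simp
  qed
  ultimately show ?thesis
    using ab unfolding test_fun_def by blast
qed

lemma white_noise_sum_centred_gaussian: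
  fixes n :: nat
  assumes "white_noise M \<xi>" "\<And>d. d < n \<Longrightarrow> test_fun (\<psi> d)"
  shows "centred_gaussian M (\<lambda>\<omega>. \<Sum>d<n. x d * \<xi> \<omega> (\<psi> d))
    (\<Sum>d<n. \<Sum>d'<n. x d * x d' * integral {0<..} (\<lambda>y. \<psi> d y * \<psi> d' y))"
proof -
  let ?\<psi>s = "map \<psi> [0..<n]" and ?xs = "map x [0..<n]"
  have "\<forall>\<phi>s cs. length cs = length \<phi>s \<longrightarrow> (\<forall>\<phi>\<in>set \<phi>s. test_fun \<phi>) \<longrightarrow>
      centred_gaussian M (\<lambda>\<omega>. \<Sum>i<length \<phi>s. cs ! i * \<xi> \<omega> (\<phi>s ! i))
        (\<Sum>i<length \<phi>s. \<Sum>j<length \<phi>s. cs ! i * cs ! j * integral {0<..} (\<lambda>x. (\<phi>s ! i) x * (\<phi>s ! j) x))"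
    using assms(1) unfolding white_noise_def by blast
  note covariance = this[rule_format, of ?xs ?\<psi>s]
  have "centred_gaussian M (\<lambda>\<omega>. \<Sum>i<length ?\<psi>s. ?xs ! i * \<xi> \<omega> (?\<psi>s ! i))
      (\<Sum>i<length ?\<psi>s. \<Sum>j<length ?\<psi>s. ?xs ! i * ?xs ! j * integral {0<..} (\<lambda>y. (?\<psi>s ! i) y * (?\<psi>s ! j) y))"
    using assms(2) by (intro covariance) auto
  then show ?thesis
    by simp
qed

lemma (in prob_space) white_noise_m_indep_vars:
  fixes n :: nat
  assumes "white_noise_m M m \<xi>" "\<And>d. d < n \<Longrightarrow> test_fun (\<psi> d)"
  shows "indep_vars (\<lambda>_. borel) (\<lambda>l \<omega>. \<Sum>d<n. a l d * \<xi> l \<omega> (\<psi> d)) {1..m}"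
proof -
  let ?TF = "{\<psi>. test_fun \<psi>}"
  have "(\<lambda>h. \<Sum>d<n. a l d * h (\<psi> d)) \<in> borel_measurable (Pi\<^sub>M ?TF (\<lambda>_. borel))" for l
    using assms(2) by (intro borel_measurable_sum borel_measurable_times borel_measurable_const)
      (auto intro: measurable_component_singleton)
  moreover have "indep_vars (\<lambda>_. Pi\<^sub>M ?TF (\<lambda>_. borel)) (\<lambda>l \<omega>. restrict (\<xi> l \<omega>) ?TF) {1..m}"
    using assms(1) by (simp add: white_noise_m_def)
  ultimately have "indep_vars (\<lambda>_. borel) (\<lambda>l \<omega>. \<Sum>d<n. a l d * restrict (\<xi> l \<omega>) ?TF (\<psi> d)) {1..m}"
    using indep_vars_compose2[where Y="\<lambda>l h. \<Sum>d<n. a l d * h (\<psi> d)" and N="\<lambda>_. borel"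
        and M'="\<lambda>_. Pi\<^sub>M ?TF (\<lambda>_. borel)" and X="\<lambda>l \<omega>. restrict (\<xi> l \<omega>) ?TF" and I="{1..m}"]
    by simp
  moreover have "(\<lambda>l \<omega>. \<Sum>d<n. a l d * restrict (\<xi> l \<omega>) ?TF (\<psi> d)) = (\<lambda>l \<omega>. \<Sum>d<n. a l d * \<xi> l \<omega> (\<psi> d))"
    using assms(2) by (intro ext sum.cong) auto
  ultimately show ?thesis
    by simp
qed

lemma (in prob_space) white_noise_m_sum_gauss_law:
  fixes n :: nat
  assumes "white_noise_m M m \<xi>" "\<And>d. d < n \<Longrightarrow> test_fun (\<psi> d)"
  shows "distr M borel (\<lambda>\<omega>. \<Sum>l\<in>{1..m}. \<Sum>d<n. a l d * \<xi> l \<omega> (\<psi> d)) =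
    gauss_law 0 (\<Sum>l\<in>{1..m}. \<Sum>d<n. \<Sum>d'<n. a l d * a l d' * integral {0<..} (\<lambda>y. \<psi> d y * \<psi> d' y))"
proof -
  define Y where "Y l \<omega> = (\<Sum>d<n. a l d * \<xi> l \<omega> (\<psi> d))" for l \<omega>
  define q where "q l = (\<Sum>d<n. \<Sum>d'<n. a l d * a l d' * integral {0<..} (\<lambda>y. \<psi> d y * \<psi> d' y))" for l
  have Y: "Y l \<in> borel_measurable M" "0 \<le> q l" "distr M borel (Y l) = gauss_law 0 (q l)" if "l \<in> {1..m}" for l
    using white_noise_sum_centred_gaussian[of M "\<xi> l" n \<psi> "a l"] assms that
    by (simp_all add: white_noise_m_def Y_def[abs_def] q_def centred_gaussian_iff_gauss_law)
  show ?thesis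
    unfolding Y_def[symmetric] q_def[symmetric]
  proof (rule distr_eq_gauss_lawI)
    show "(\<lambda>\<omega>. \<Sum>l\<in>{1..m}. Y l \<omega>) \<in> borel_measurable M" "0 \<le> sum q {1..m}"
      using Y by (auto intro: sum_nonneg)
    fix s
    have "char (distr M borel (\<lambda>\<omega>. \<Sum>l\<in>{1..m}. Y l \<omega>)) s = (\<Prod>l\<in>{1..m}. char (distr M borel (Y l)) s)"
      using white_noise_m_indep_vars[OF assms] by (intro char_distr_sum) (simp add: Y_def[abs_def])
    also have "\<dots> = (\<Prod>l\<in>{1..m}. complex_of_real (exp (- q l * s\<^sup>2 / 2)))"
      using Y by (intro prod.cong refl) (simp add: char_gauss_law)
    also have "\<dots> = complex_of_real (exp (\<Sum>l\<in>{1..m}. - q l * s\<^sup>2 / 2))"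
      by (simp only: exp_sum of_real_prod finite_atLeastAtMost)
    also have "(\<Sum>l\<in>{1..m}. - q l * s\<^sup>2 / 2) = - sum q {1..m} * s\<^sup>2 / 2"
      by (simp add: sum_negf sum_divide_distrib sum_distrib_right)
    finally show "char (distr M borel (\<lambda>\<omega>. \<Sum>l\<in>{1..m}. Y l \<omega>)) s = iexp (s * 0) * exp (- sum q {1..m} * s\<^sup>2 / 2)"
      by simp
  qed
qed

section \<open>The algebraic block driven by white noise\<close>

context
  fixes M :: "'a measure" and m q1 r :: nat
    and c :: "nat \<Rightarrow> (real \<Rightarrow> real) \<Rightarrow> real"
    and \<xi> :: "nat \<Rightarrow> 'a \<Rightarrow> (real \<Rightarrow> real) \<Rightarrow> real"
    and \<rho> :: "nat \<Rightarrow> nat \<Rightarrow> real"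
    and v :: "nat \<Rightarrow> 'a \<Rightarrow> (real \<Rightarrow> real) \<Rightarrow> real"
    and \<phi> :: "real \<Rightarrow> real"
  assumes prob_space_M: "prob_space M"
    and white_noise: "white_noise_m M m \<xi>"
    and v: "\<forall>j\<in>{1..q1}. \<forall>\<omega>\<in>space M. \<forall>\<psi>. test_fun \<psi> \<longrightarrow>
           v j \<omega> \<psi> = (\<Sum>k=j..q1. c k ((deriv ^^ (k - j)) \<psi>)
                         + (\<Sum>l=1..m. \<rho> k l * \<xi> l \<omega> ((deriv ^^ (k - j)) \<psi>)))"
    and r: "r \<in> {1..q1}" and \<rho>_r: "L2_set (\<rho> r) {1..m} \<noteq> 0"
    and \<rho>_above_r: "\<forall>k\<in>{r<..q1}. L2_set (\<rho> k) {1..m} = 0"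
    and \<phi>: "\<phi> \<in> E_set q1"
begin

interpretation prob_space M
  by (rule prob_space_M)

definition block_mean :: "nat \<Rightarrow> real" where
  "block_mean j = (\<Sum>k=j..q1. c k ((deriv ^^ (k - j)) \<phi>))"

text \<open>The coefficient of the noise value \<xi> l \<omega> ((deriv ^^ d) \<phi>) in v j \<omega> \<phi>, after reindexing
  k = j + d.\<close>

definition block_noise_coeff :: "nat \<Rightarrow> nat \<Rightarrow> nat \<Rightarrow> real" where
  "block_noise_coeff j d l = (if j + d \<le> q1 then \<rho> (j + d) l else 0)"

definition block_comb_coeff :: "(nat \<Rightarrow> real) \<Rightarrow> nat \<Rightarrow> nat \<Rightarrow> real" where
  "block_comb_coeff t l d = (\<Sum>j\<in>{1..r}. t j * block_noise_coeff j d l)"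

definition deriv_gram :: "nat \<Rightarrow> nat \<Rightarrow> real" where
  "deriv_gram d d' = integral {0<..} (\<lambda>x. (deriv ^^ d) \<phi> x * (deriv ^^ d') \<phi> x)"

definition block_cov :: "(nat \<Rightarrow> real) \<Rightarrow> (nat \<Rightarrow> real) \<Rightarrow> real" where
  "block_cov u w = (\<Sum>l\<in>{1..m}. \<Sum>d<q1. \<Sum>d'<q1. block_comb_coeff u l d * block_comb_coeff w l d' * deriv_gram d d')"

lemma test_fun_deriv_\<phi>: "test_fun ((deriv ^^ d) \<phi>)"
  using \<phi> by (simp add: E_set_def test_fun_deriv)

lemma borel_measurable_noise: "l \<in> {1..m} \<Longrightarrow> (\<lambda>\<omega>. \<xi> l \<omega> ((deriv ^^ d) \<phi>)) \<in> borel_measurable M"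
  using white_noise test_fun_deriv_\<phi> by (simp add: white_noise_m_def white_noise_def)

lemma \<rho>_above_r_eq_0: "k \<in> {r<..q1} \<Longrightarrow> l \<in> {1..m} \<Longrightarrow> \<rho> k l = 0"
  using \<rho>_above_r L2_set_eq_0_iff[of "{1..m}" "\<rho> k"] by auto

lemma v_eq:
  assumes "j \<in> {1..q1}" "\<omega> \<in> space M"
  shows "v j \<omega> \<phi> = block_mean j + (\<Sum>l\<in>{1..m}. \<Sum>d<q1. block_noise_coeff j d l * \<xi> l \<omega> ((deriv ^^ d) \<phi>))"
proof -
  have shift: "(\<Sum>k=j..q1. f k (k - j)) = (\<Sum>d<q1. if j + d \<le> q1 then f (j + d) d else 0)" for f :: "nat \<Rightarrow> nat \<Rightarrow> real"
  proof -
    have "(\<Sum>k=j..q1. f k (k - j)) = (\<Sum>d\<in>{d\<in>{..<q1}. j + d \<le> q1}. f (j + d) d)"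
      using assms(1) by (intro sum.reindex_bij_witness[where i="\<lambda>d. j + d" and j="\<lambda>k. k - j"]) auto
    also have "\<dots> = (\<Sum>d<q1. if j + d \<le> q1 then f (j + d) d else 0)"
      by (rule sum.inter_filter) simp
    finally show ?thesis .
  qed
  have "v j \<omega> \<phi> = block_mean j + (\<Sum>k=j..q1. \<Sum>l=1..m. \<rho> k l * \<xi> l \<omega> ((deriv ^^ (k - j)) \<phi>))"
    using v assms \<phi> by (simp add: E_set_def block_mean_def sum.distrib)
  also have "(\<Sum>k=j..q1. \<Sum>l=1..m. \<rho> k l * \<xi> l \<omega> ((deriv ^^ (k - j)) \<phi>)) =
      (\<Sum>d<q1. \<Sum>l\<in>{1..m}. block_noise_coeff j d l * \<xi> l \<omega> ((deriv ^^ d) \<phi>))"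
    unfolding shift[of "\<lambda>k d. \<Sum>l=1..m. \<rho> k l * \<xi> l \<omega> ((deriv ^^ d) \<phi>)"]
    by (intro sum.cong refl) (simp add: block_noise_coeff_def)
  finally show ?thesis
    by (simp add: sum.swap[of _ "{..<q1}"])
qed

lemma v_above_r_eq_block_mean:
  assumes "j \<in> {r<..q1}" "\<omega> \<in> space M"
  shows "v j \<omega> \<phi> = block_mean j"
proof -
  have "block_noise_coeff j d l = 0" if "l \<in> {1..m}" for d l
    using assms(1) \<rho>_above_r_eq_0[of "j + d" l] that by (auto simp: block_noise_coeff_def)
  then show ?thesis
    using assms r by (simp add: v_eq)
qed

lemma borel_measurable_v: "j \<in> {1..q1} \<Longrightarrow> (\<lambda>\<omega>. v j \<omega> \<phi>) \<in> borel_measurable M"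
proof -
  assume j: "j \<in> {1..q1}"
  have "(\<lambda>\<omega>. block_mean j + (\<Sum>l\<in>{1..m}. \<Sum>d<q1. block_noise_coeff j d l * \<xi> l \<omega> ((deriv ^^ d) \<phi>))) \<in> borel_measurable M"
    by (intro borel_measurable_add borel_measurable_const borel_measurable_sum borel_measurable_times
        borel_measurable_noise) auto
  then show ?thesis
    by (rule measurable_cong[THEN iffD1, rotated]) (simp add: v_eq[OF j])
qed

lemma linear_combination_v_eq:
  assumes "\<omega> \<in> space M"
  shows "(\<Sum>j\<in>{1..r}. t j * v j \<omega> \<phi>) =
    (\<Sum>j\<in>{1..r}. t j * block_mean j) + (\<Sum>l\<in>{1..m}. \<Sum>d<q1. block_comb_coeff t l d * \<xi> l \<omega> ((deriv ^^ d) \<phi>))"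
proof -
  have "(\<Sum>j\<in>{1..r}. t j * v j \<omega> \<phi>) = (\<Sum>j\<in>{1..r}. t j * block_mean j) +
      (\<Sum>j\<in>{1..r}. \<Sum>l\<in>{1..m}. \<Sum>d<q1. t j * block_noise_coeff j d l * \<xi> l \<omega> ((deriv ^^ d) \<phi>))"
    using assms r by (simp add: v_eq algebra_simps sum.distrib sum_distrib_left)
  also have "(\<Sum>j\<in>{1..r}. \<Sum>l\<in>{1..m}. \<Sum>d<q1. t j * block_noise_coeff j d l * \<xi> l \<omega> ((deriv ^^ d) \<phi>)) =
      (\<Sum>l\<in>{1..m}. \<Sum>d<q1. block_comb_coeff t l d * \<xi> l \<omega> ((deriv ^^ d) \<phi>))"
  proof -
    have "(\<Sum>j\<in>{1..r}. \<Sum>l\<in>{1..m}. \<Sum>d<q1. t j * block_noise_coeff j d l * \<xi> l \<omega> ((deriv ^^ d) \<phi>)) =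
        (\<Sum>l\<in>{1..m}. \<Sum>j\<in>{1..r}. \<Sum>d<q1. t j * block_noise_coeff j d l * \<xi> l \<omega> ((deriv ^^ d) \<phi>))"
      by (rule sum.swap)
    also have "\<dots> = (\<Sum>l\<in>{1..m}. \<Sum>d<q1. \<Sum>j\<in>{1..r}. t j * block_noise_coeff j d l * \<xi> l \<omega> ((deriv ^^ d) \<phi>))"
      by (intro sum.cong refl sum.swap)
    finally show ?thesis
      by (simp add: block_comb_coeff_def sum_distrib_right)
  qed
  finally show ?thesis .
qed

text \<open>The Gram matrix of the derivatives of the test function is a covariance matrix of the
  white noise, hence positive semidefinite; the white noise exists because m > 0.\<close>

lemma deriv_gram_psd: "0 \<le> (\<Sum>d<q1. \<Sum>d'<q1. x d * x d' * deriv_gram d d')"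
proof -
  have "1 \<in> {1..m}"
    using \<rho>_r by (cases m) auto
  then have "white_noise M (\<xi> 1)"
    using white_noise by (simp add: white_noise_m_def)
  from white_noise_sum_centred_gaussian[OF this, of q1 "\<lambda>d. (deriv ^^ d) \<phi>" x] show ?thesis
    by (simp add: test_fun_deriv_\<phi> centred_gaussian_def deriv_gram_def)
qed

lemma deriv_gram_definite:
  assumes "(\<Sum>d<q1. \<Sum>d'<q1. x d * x d' * deriv_gram d d') = 0" "d < q1"
  shows "x d = 0"
proof -
  define a where "a j = (-1) ^ j * x j" for j
  have "(\<Sum>j<q1. cov_deriv \<phi> i j * a j) = 0" if "i < q1" for i
  proof -
    have "cov_deriv \<phi> i j * a j = (-1) ^ i * (deriv_gram i j * x j)" for j
    proof -
      have "cov_deriv \<phi> i j * a j = ((-1) ^ (i + j) * (-1) ^ j) * (deriv_gram i j * x j)"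
        by (simp add: cov_deriv_def a_def deriv_gram_def mult_ac)
      also have "(-1::real) ^ (i + j) * (-1) ^ j = (-1) ^ i"
        by (simp add: power_add mult.assoc power_mult_distrib[symmetric])
      finally show ?thesis .
    qed
    then have "(\<Sum>j<q1. cov_deriv \<phi> i j * a j) = (-1) ^ i * (\<Sum>j<q1. deriv_gram i j * x j)"
      by (simp add: sum_distrib_left)
    also have "(\<Sum>j<q1. deriv_gram i j * x j) = 0"
      using psd_quadratic_form_zero_imp_kernel[OF deriv_gram_psd _ assms(1) that] by (simp add: deriv_gram_def mult.commute)
    finally show ?thesis
      by simp
  qed
  then have "\<forall>j<q1. a j = 0"
    using \<phi> unfolding E_set_def by blast
  then show ?thesis
    using assms(2) by (simp add: a_def)
qed

lemma block_cov_nonneg: "0 \<le> block_cov t t"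
  unfolding block_cov_def by (intro sum_nonneg deriv_gram_psd)

text \<open>Indices above p reach rows of \<rho> beyond r, which vanish.\<close>

lemma block_comb_coeff_least_index:
  assumes p: "p \<in> {1..r}" and below_p: "\<And>j. j \<in> {1..<p} \<Longrightarrow> t j = 0" and l: "l \<in> {1..m}"
  shows "block_comb_coeff t l (r - p) = t p * \<rho> r l"
proof -
  have others: "t j * block_noise_coeff j (r - p) l = 0" if "j \<in> {1..r} - {p}" for j
  proof (cases "j < p")
    case True
    then show ?thesis
      using below_p that by simp
  next
    case False
    then have "j + (r - p) \<in> {r<..q1} \<or> q1 < j + (r - p)"
      using that p by auto
    then show ?thesis
      using \<rho>_above_r_eq_0[OF _ l] by (auto simp: block_noise_coeff_def)
  qed
  have "block_comb_coeff t l (r - p) =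
      t p * block_noise_coeff p (r - p) l + (\<Sum>j\<in>{1..r} - {p}. t j * block_noise_coeff j (r - p) l)"
    unfolding block_comb_coeff_def using p by (intro sum.remove) auto
  also have "(\<Sum>j\<in>{1..r} - {p}. t j * block_noise_coeff j (r - p) l) = 0"
    using others by (intro sum.neutral ballI)
  also have "block_noise_coeff p (r - p) l = \<rho> r l"
    using p r by (simp add: block_noise_coeff_def)
  finally show ?thesis
    by simp
qed

lemma block_cov_pos_def:
  assumes "\<exists>p\<in>{1..r}. t p \<noteq> 0"
  shows "0 < block_cov t t"
proof (rule ccontr)
  assume "\<not> 0 < block_cov t t"
  then have "block_cov t t = 0"
    using block_cov_nonneg[of t] by simp
  then have "\<forall>l\<in>{1..m}. (\<Sum>d<q1. \<Sum>d'<q1. block_comb_coeff t l d * block_comb_coeff t l d' * deriv_gram d d') = 0"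
    unfolding block_cov_def by (subst (asm) sum_nonneg_eq_0_iff) (auto intro: deriv_gram_psd)
  then have comb_0: "block_comb_coeff t l d = 0" if "l \<in> {1..m}" "d < q1" for l d
    using deriv_gram_definite that by blast
  define S where "S = {p\<in>{1..r}. t p \<noteq> 0}"
  have "finite S" "S \<noteq> {}"
    using assms by (auto simp: S_def)
  define p where "p = Min S"
  have "p \<in> S"
    using \<open>finite S\<close> \<open>S \<noteq> {}\<close> by (simp add: p_def)
  then have p: "p \<in> {1..r}" "t p \<noteq> 0"
    by (simp_all add: S_def)
  have "t j = 0" if "j \<in> {1..<p}" for j
  proof (rule ccontr)
    assume "t j \<noteq> 0"
    with that p have "j \<in> S"
      by (auto simp: S_def)
    then have "p \<le> j"
      using \<open>finite S\<close> by (simp add: p_def)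
    with that show False
      by simp
  qed
  then have "t p * \<rho> r l = 0" if "l \<in> {1..m}" for l
    using comb_0[OF that, of "r - p"] p r block_comb_coeff_least_index[OF p(1) _ that] by auto
  with p(2) \<rho>_r show False
    by (simp add: L2_set_eq_0_iff)
qed

lemma pos_def_form_block_cov: "pos_def_form r block_cov"
proof
  show "block_cov u w = block_cov w u" for u w
    unfolding block_cov_def
  proof (rule sum.cong[OF refl])
    fix l
    have "(\<Sum>d<q1. \<Sum>d'<q1. block_comb_coeff u l d * block_comb_coeff w l d' * deriv_gram d d') =
        (\<Sum>d'<q1. \<Sum>d<q1. block_comb_coeff u l d * block_comb_coeff w l d' * deriv_gram d d')"
      by (rule sum.swap)
    then show "(\<Sum>d<q1. \<Sum>d'<q1. block_comb_coeff u l d * block_comb_coeff w l d' * deriv_gram d d') =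
        (\<Sum>d<q1. \<Sum>d'<q1. block_comb_coeff w l d * block_comb_coeff u l d' * deriv_gram d d')"
      by (simp add: deriv_gram_def mult_ac)
  qed
  show "block_cov u (\<lambda>p. a * w p + b * w' p) = a * block_cov u w + b * block_cov u w'" for u w w' a b
    by (simp add: block_cov_def block_comb_coeff_def algebra_simps sum.distrib sum_distrib_left)
  show "\<exists>p\<in>{1..r}. u p \<noteq> 0 \<Longrightarrow> 0 < block_cov u u" for u
    by (rule block_cov_pos_def)
  show "\<forall>p\<in>{1..r}. u p = u' p \<Longrightarrow> block_cov u w = block_cov u' w" for u u' w
    by (simp add: block_cov_def block_comb_coeff_def)
qed

lemma distr_linear_combination_v:
  "distr M borel (\<lambda>\<omega>. \<Sum>j\<in>{1..r}. t j * v j \<omega> \<phi>) = gauss_law (\<Sum>j\<in>{1..r}. t j * block_mean j) (block_cov t t)"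
proof -
  let ?noise = "\<lambda>\<omega>. \<Sum>l\<in>{1..m}. \<Sum>d<q1. block_comb_coeff t l d * \<xi> l \<omega> ((deriv ^^ d) \<phi>)"
  have noise: "distr M borel ?noise = gauss_law 0 (block_cov t t)"
    unfolding block_cov_def deriv_gram_def using white_noise test_fun_deriv_\<phi>
    by (intro white_noise_m_sum_gauss_law)
  have "?noise \<in> borel_measurable M"
    by (intro borel_measurable_sum borel_measurable_times borel_measurable_const borel_measurable_noise) auto
  then have "distr M borel (\<lambda>\<omega>. (\<Sum>j\<in>{1..r}. t j * block_mean j) + ?noise \<omega>) = gauss_law (\<Sum>j\<in>{1..r}. t j * block_mean j) (block_cov t t)"
    using block_cov_nonneg noise by (rule distr_add_const_gauss_law)
  moreover have "distr M borel (\<lambda>\<omega>. \<Sum>j\<in>{1..r}. t j * v j \<omega> \<phi>) =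
      distr M borel (\<lambda>\<omega>. (\<Sum>j\<in>{1..r}. t j * block_mean j) + ?noise \<omega>)"
    by (intro distr_cong refl linear_combination_v_eq)
  ultimately show ?thesis
    by simp
qed

lemma borel_measurable_linear_combination_v:
  "(\<lambda>\<omega>. \<Sum>j\<in>{1..r}. t j * v j \<omega> \<phi>) \<in> borel_measurable M"
  using r by (intro borel_measurable_sum borel_measurable_times borel_measurable_const borel_measurable_v) auto

lemma gaussian_vector_v: "gaussian_vector M (\<lambda>j \<omega>. v j \<omega> \<phi>) {1..r}"
  unfolding gaussian_vector_def
  using borel_measurable_linear_combination_v block_cov_nonneg distr_linear_combination_v
  by (blast intro: gaussian_rvI_gauss_law)

lemma absolutely_continuous_v:
  "absolutely_continuous (Pi\<^sub>M {1..r} (\<lambda>_. lborel))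
     (distr M (Pi\<^sub>M {1..r} (\<lambda>_. lborel)) (\<lambda>\<omega>. \<lambda>j\<in>{1..r}. v j \<omega> \<phi>))"
  using r by (intro absolutely_continuous_gaussian_vector[OF prob_space_M pos_def_form_block_cov _ distr_linear_combination_v])
    (auto intro: borel_measurable_v)

lemma v_above_r_degenerate: "\<exists>a :: nat \<Rightarrow> real. AE \<omega> in M. \<forall>j\<in>{r<..q1}. v j \<omega> \<phi> = a j"
  using v_above_r_eq_block_mean by (intro exI[of _ block_mean] AE_I2) auto

end


theorem proposition4p2:
  fixes M :: "'a measure" and m q1 r :: nat
    and c :: "nat \<Rightarrow> (real \<Rightarrow> real) \<Rightarrow> real"
    and \<xi> :: "nat \<Rightarrow> 'a \<Rightarrow> (real \<Rightarrow> real) \<Rightarrow> real"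
    and \<rho> :: "nat \<Rightarrow> nat \<Rightarrow> real"
    and v :: "nat \<Rightarrow> 'a \<Rightarrow> (real \<Rightarrow> real) \<Rightarrow> real"
    and \<phi> :: "real \<Rightarrow> real"
  assumes "prob_space M"
    and "q1 \<ge> 1"
    and "\<forall>k\<in>{1..q1}. is_distribution (c k)"
    and "white_noise_m M m \<xi>"
    and "\<forall>j\<in>{1..q1}. \<forall>\<omega>\<in>space M. \<forall>\<psi>. test_fun \<psi> \<longrightarrow>
           v j \<omega> \<psi> = (\<Sum>k=j..q1. c k ((deriv ^^ (k - j)) \<psi>)
                         + (\<Sum>l=1..m. \<rho> k l * \<xi> l \<omega> ((deriv ^^ (k - j)) \<psi>)))"
    and "r \<in> {1..q1}" and "L2_set (\<rho> r) {1..m} \<noteq> 0"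
    and "\<forall>k\<in>{r<..q1}. L2_set (\<rho> k) {1..m} = 0"
    and "\<phi> \<in> E_set q1"
  shows "gaussian_vector M (\<lambda>j \<omega>. v j \<omega> \<phi>) {1..r}
    \<and> absolutely_continuous (Pi\<^sub>M {1..r} (\<lambda>_. lborel))
        (distr M (Pi\<^sub>M {1..r} (\<lambda>_. lborel)) (\<lambda>\<omega>. \<lambda>j\<in>{1..r}. v j \<omega> \<phi>))
    \<and> (\<exists>a :: nat \<Rightarrow> real. AE \<omega> in M. \<forall>j\<in>{r<..q1}. v j \<omega> \<phi> = a j)"
  using gaussian_vector_v[OF assms(1,4-9)] absolutely_continuous_v[OF assms(1,4-9)]
    v_above_r_degenerate[OF assms(1,4-9)]
  by blast

end
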